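(* Let $k\ge3$, $P_k(x)=-\left(x+\frac{k-1}{2}\right)\left(x-\frac{k-1}{2}\right)\prod_{i=1}^{k-1}\left(x-\left(i-\frac k2\right)\right)^2$, let $Z_k=(X_k,Y_k)$ with $X_k(x,y)=(1,P_k'(x))$ for $y\ge0$, $Y_k(x,y)=(-1,P_k'(x))$ for $y\le0$, and $\Lambda_k=\{(x,\pm P_k(x)):\frac{1-k}{2}\le x\le\frac{k-1}{2}\}$. Let $\widetilde Z$ be any planar PSVF presenting a $(k-1)$-homoclinic loop, and let $\widetilde\Lambda$ be the set formed by this loop. Then $Z_k$ restricted to $\Lambda_k$ and $\widetilde Z$ restricted to $\widetilde\Lambda$ are $\Sigma$-equivalent.
   Context: A planar PSVF $Z=(X,Y)$ with switching manifold $\Sigma=f^{-1}(0)$ ($f$ smooth, $0$ a regular value) equals the smooth field $X$ on $\Sigma^+=\{f\ge0\}$ and $Y$ on $\Sigma^-=\{f\le0\}$ (for $Z_k$, $f(x,y)=y$). With $Wf=\langle\nabla f,W\rangle$, $W^2f=\langle\nabla(Wf),W\rangle$: crossing (sewing) points are $p\in\Sigma$ with $Xf(p)Yf(p)>0$; sliding region $\{Xf<0<Yf\}$, escaping $\{Yf<0<Xf\}$, with sliding field $Z^T=(Yf\,X-Xf\,Y)/(Yf-Xf)$ there. A point $p\in\Sigma$ is a fold of $X$ if $Xf(p)=0\neq X^2f(p)$, visible if $X^2f(p)>0$; a fold of $Y$ is visible if $Y^2f(p)<0$; a visible-visible two-fold is a visible fold of both. Trajectories follow the Filippov convention: off $\Sigma$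 follow $X$ or $Y$; at crossing points pass from one side to the other; at escaping/sliding points use $Z^T$ backward/forward and any of $X,Y,Z^T$ in the other time direction; at a regular tangency (not invisible for both fields) choose any of $X,Y,Z^T$ backward and forward; a global trajectory is a bi-infinite orientation-preserving concatenation of such local trajectories defined for all $t\in\mathbb{R}$. A $k$-homoclinic loop ($k\ge1$) is a global trajectory presenting $k$ distinct visible-visible two-folds $p_1,\dots,p_k$ such that, after passing through $p_i$, the trajectory reaches $\Sigma$ at $p_{i-1}$ or $p_{i+1}$ ($i=2,\dots,k-1$); for $i=1$ (resp. $i=k$) it reaches $\Sigma$ at a sewing point or at $p_{i+1}$ (resp. $p_{i-1}$). $Z|_\Lambda$ and $\widetilde Z|_{\widetilde\Lambda}$ are $\Sigma$-equivalent if there is an orientation-preserving homeomorphism $h:\Lambda\to\widetilde\Lambda$ sending $\Lambda\cap\Sigma$ onto $\widetilde\Lambda\cap\widetilde\Sigma$, orbits of $X$ in $\Lambda\cap\Sigma^+$ onto orbits of $\widetilde X$ in $\widetilde\Lambda\cap\widetilde\Sigma^+$, orbits of $Y$ in $\Lambda\cap\Sigma^-$ onto orbits of $\widetilde Y$ in $\widetilde\Lambda\cap\widetilde\Sigma^-$, and orbits of $Z^T$ onto orbits of $\widetilde Z^T$. *)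

theory Defs
  imports "HOL-Analysis.Analysis"
begin

type_synonym pt = "real \<times> real"

fun Ck :: "nat \<Rightarrow> ('a::real_normed_vector \<Rightarrow> 'b::real_normed_vector) \<Rightarrow> bool" where
  "Ck 0 g = continuous_on UNIV g"
| "Ck (Suc n) g = (g differentiable_on UNIV \<and>
      (\<forall>v. Ck n (\<lambda>x. frechet_derivative g (at x) v)))"

definition smooth :: "('a::real_normed_vector \<Rightarrow> 'b::real_normed_vector) \<Rightarrow> bool" where
  "smooth g \<longleftrightarrow> (\<forall>n. Ck n g)"

section \<open>Planar piecewise smooth vector fields Z = (X,Y) with switching manifold f^-1(0)\<close>

definition PSVF :: "(pt \<Rightarrow> pt) \<Rightarrow> (pt \<Rightarrow> pt) \<Rightarrow> (pt \<Rightarrow> real) \<Rightarrow> bool" where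
  "PSVF X Y f \<longleftrightarrow> smooth X \<and> smooth Y \<and> smooth f \<and>
     (\<forall>p. f p = 0 \<longrightarrow> frechet_derivative f (at p) \<noteq> (\<lambda>v. 0))"

definition Sig :: "(pt \<Rightarrow> real) \<Rightarrow> pt set" where
  "Sig f = {p. f p = 0}"

definition Splus :: "(pt \<Rightarrow> real) \<Rightarrow> pt set" where
  "Splus f = {p. f p \<ge> 0}"

definition Sminus :: "(pt \<Rightarrow> real) \<Rightarrow> pt set" where
  "Sminus f = {p. f p \<le> 0}"

definition Lie :: "(pt \<Rightarrow> pt) \<Rightarrow> (pt \<Rightarrow> real) \<Rightarrow> pt \<Rightarrow> real" where
  "Lie W f p = frechet_derivative f (at p) (W p)"

definition Lie2 :: "(pt \<Rightarrow> pt) \<Rightarrow> (pt \<Rightarrow> real) \<Rightarrow> pt \<Rightarrow> real" where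
  "Lie2 W f p = frechet_derivative (Lie W f) (at p) (W p)"

definition crossing :: "(pt \<Rightarrow> pt) \<Rightarrow> (pt \<Rightarrow> pt) \<Rightarrow> (pt \<Rightarrow> real) \<Rightarrow> pt \<Rightarrow> bool" where
  "crossing X Y f p \<longleftrightarrow> p \<in> Sig f \<and> Lie X f p * Lie Y f p > 0"

definition slide_esc :: "(pt \<Rightarrow> pt) \<Rightarrow> (pt \<Rightarrow> pt) \<Rightarrow> (pt \<Rightarrow> real) \<Rightarrow> pt set" where
  "slide_esc X Y f = {p \<in> Sig f. (Lie X f p < 0 \<and> 0 < Lie Y f p) \<or> (Lie Y f p < 0 \<and> 0 < Lie X f p)}"

definition ZT :: "(pt \<Rightarrow> pt) \<Rightarrow> (pt \<Rightarrow> pt) \<Rightarrow> (pt \<Rightarrow> real) \<Rightarrow> pt \<Rightarrow> pt" where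
  "ZT X Y f p = (1 / (Lie Y f p - Lie X f p)) *\<^sub>R (Lie Y f p *\<^sub>R X p - Lie X f p *\<^sub>R Y p)"

text \<open>Points of Sigma where the sliding field may be used: sliding/escaping points and
  regular tangencies (where the sliding field formula is still defined).\<close>
definition ZT_dom :: "(pt \<Rightarrow> pt) \<Rightarrow> (pt \<Rightarrow> pt) \<Rightarrow> (pt \<Rightarrow> real) \<Rightarrow> pt set" where
  "ZT_dom X Y f = {p \<in> Sig f. Lie X f p * Lie Y f p \<le> 0 \<and> Lie X f p \<noteq> Lie Y f p}"

definition vv_twofold :: "(pt \<Rightarrow> pt) \<Rightarrow> (pt \<Rightarrow> pt) \<Rightarrow> (pt \<Rightarrow> real) \<Rightarrow> pt \<Rightarrow> bool" where
  "vv_twofold X Y f p \<longleftrightarrow> p \<in> Sig f \<and>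
     Lie X f p = 0 \<and> Lie2 X f p > 0 \<and> Lie Y f p = 0 \<and> Lie2 Y f p < 0"

definition sol_in :: "(pt \<Rightarrow> pt) \<Rightarrow> pt set \<Rightarrow> (real \<Rightarrow> pt) \<Rightarrow> real \<Rightarrow> real \<Rightarrow> bool" where
  "sol_in V S \<gamma> a b \<longleftrightarrow> a \<le> b \<and>
     (\<forall>t\<in>{a..b}. \<gamma> t \<in> S \<and> (\<gamma> has_vector_derivative V (\<gamma> t)) (at t within {a..b}))"

definition local_piece :: "(pt \<Rightarrow> pt) \<Rightarrow> (pt \<Rightarrow> pt) \<Rightarrow> (pt \<Rightarrow> real) \<Rightarrow> (real \<Rightarrow> pt) \<Rightarrow> real \<Rightarrow> real \<Rightarrow> bool" where
  "local_piece X Y f \<gamma> a b \<longleftrightarrow>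
     sol_in X (Splus f) \<gamma> a b \<or> sol_in Y (Sminus f) \<gamma> a b \<or> sol_in (ZT X Y f) (ZT_dom X Y f) \<gamma> a b"

definition global_traj :: "(pt \<Rightarrow> pt) \<Rightarrow> (pt \<Rightarrow> pt) \<Rightarrow> (pt \<Rightarrow> real) \<Rightarrow> (real \<Rightarrow> pt) \<Rightarrow> bool" where
  "global_traj X Y f \<gamma> \<longleftrightarrow>
     (\<forall>t. \<exists>\<epsilon>>0. local_piece X Y f \<gamma> (t - \<epsilon>) t \<and> local_piece X Y f \<gamma> t (t + \<epsilon>))"

text \<open>A k-homoclinic loop (k >= 1): a closed global trajectory which, along one period,
  meets Sigma exactly at a sewing point q, then p_1, ..., p_k, then a sewing point q',
  then p_k, ..., p_1 (and back to q); the p_i are distinct visible-visible two-folds.\<close>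
definition homoclinic_loop ::
  "(pt \<Rightarrow> pt) \<Rightarrow> (pt \<Rightarrow> pt) \<Rightarrow> (pt \<Rightarrow> real) \<Rightarrow> nat \<Rightarrow> (real \<Rightarrow> pt) \<Rightarrow> (nat \<Rightarrow> pt) \<Rightarrow> bool" where
  "homoclinic_loop X Y f k \<gamma> p \<longleftrightarrow> k \<ge> 1 \<and>
     global_traj X Y f \<gamma> \<and>
     inj_on p {1..k} \<and> (\<forall>i\<in>{1..k}. vv_twofold X Y f (p i)) \<and>
     (\<exists>T>0. (\<forall>t. \<gamma> (t + T) = \<gamma> t) \<and>
       (\<exists>\<tau>::nat \<Rightarrow> real.
          (\<forall>j\<le>2*k+1. \<tau> j < \<tau> (Suc j)) \<and> \<tau> (2*k+2) = \<tau> 0 + T \<and>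
          (\<forall>j\<le>2*k+1. \<gamma> (\<tau> j) \<in> Sig f) \<and>
          (\<forall>j\<le>2*k+1. \<forall>s. \<tau> j < s \<and> s < \<tau> (Suc j) \<longrightarrow> \<gamma> s \<notin> Sig f) \<and>
          crossing X Y f (\<gamma> (\<tau> 0)) \<and> crossing X Y f (\<gamma> (\<tau> (k+1))) \<and>
          (\<forall>i\<in>{1..k}. \<gamma> (\<tau> i) = p i \<and> \<gamma> (\<tau> (k+1+i)) = p (k+1-i))))"

definition reach :: "(pt \<Rightarrow> pt) \<Rightarrow> pt set \<Rightarrow> pt \<Rightarrow> pt \<Rightarrow> bool" where
  "reach V S p q \<longleftrightarrow> (\<exists>T\<ge>0. \<exists>\<gamma>. \<gamma> 0 = p \<and> \<gamma> T = q \<and> sol_in V S \<gamma> 0 T)"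

definition sigma_equiv ::
  "(pt \<Rightarrow> pt) \<Rightarrow> (pt \<Rightarrow> pt) \<Rightarrow> (pt \<Rightarrow> real) \<Rightarrow> pt set \<Rightarrow>
   (pt \<Rightarrow> pt) \<Rightarrow> (pt \<Rightarrow> pt) \<Rightarrow> (pt \<Rightarrow> real) \<Rightarrow> pt set \<Rightarrow> bool" where
  "sigma_equiv X Y f L X' Y' f' L' \<longleftrightarrow>
    (\<exists>h g. homeomorphism L L' h g \<and>
      h ` (L \<inter> Sig f) = L' \<inter> Sig f' \<and>
      h ` (L \<inter> Splus f) = L' \<inter> Splus f' \<and>
      h ` (L \<inter> Sminus f) = L' \<inter> Sminus f' \<and>
      h ` (L \<inter> slide_esc X Y f) = L' \<inter> slide_esc X' Y' f' \<and>
      (\<forall>p\<in>L \<inter> Splus f. \<forall>q\<in>L \<inter> Splus f.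
          reach X (L \<inter> Splus f) p q \<longleftrightarrow> reach X' (L' \<inter> Splus f') (h p) (h q)) \<and>
      (\<forall>p\<in>L \<inter> Sminus f. \<forall>q\<in>L \<inter> Sminus f.
          reach Y (L \<inter> Sminus f) p q \<longleftrightarrow> reach Y' (L' \<inter> Sminus f') (h p) (h q)) \<and>
      (\<forall>p\<in>L \<inter> slide_esc X Y f. \<forall>q\<in>L \<inter> slide_esc X Y f.
          reach (ZT X Y f) (L \<inter> slide_esc X Y f) p q \<longleftrightarrow>
          reach (ZT X' Y' f') (L' \<inter> slide_esc X' Y' f') (h p) (h q)))"

definition Pk :: "nat \<Rightarrow> real \<Rightarrow> real" where
  "Pk k x = - ((x + (real k - 1) / 2) * (x - (real k - 1) / 2) *
              (\<Prod>i=1..k-1. (x - (real i - real k / 2))^2))"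

definition Xk :: "nat \<Rightarrow> pt \<Rightarrow> pt" where
  "Xk k = (\<lambda>(x, y). (1, deriv (Pk k) x))"

definition Yk :: "nat \<Rightarrow> pt \<Rightarrow> pt" where
  "Yk k = (\<lambda>(x, y). (-1, deriv (Pk k) x))"

definition Lk :: "nat \<Rightarrow> pt set" where
  "Lk k = {(x, Pk k x) | x. (1 - real k) / 2 \<le> x \<and> x \<le> (real k - 1) / 2}
        \<union> {(x, - Pk k x) | x. (1 - real k) / 2 \<le> x \<and> x \<le> (real k - 1) / 2}"

end

(* Cut the loop at its consecutive times tau 0 < ... < tau (2n+2) on Sigma, n = k - 1.  Each arc
   in between follows X above or Y below Sigma.  By uniqueness of solutions, two arcs of the same
   field with a common end point on Sigma have a common start point as well, and conversely.
   Together with the visiting order q, p 1, ..., p n, q', p n, ..., p 1 of the loop and the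
   transversality at the sewing points q, q', this forces all arcs from q to q' to one side of Sigma
   and all arcs back to the other side, exactly as on Lambda_k, the union of the graphs of P_k and
   -P_k whose zeros play the roles of q, p 1, ..., p n, q'.  Sending the abscissas of Lambda_k
   piecewise linearly and monotonically onto the times of the loop, zeros to Sigma-times, gives the
   homeomorphism: on each side the orbits of the fields are arcs ordered by time, and neither loop
   has sliding or escaping points. *)

theory Submission
  imports Defs
begin

lemma has_vector_derivative_within_Un:
  assumes "(g has_vector_derivative v) (at x within S)" "(g has_vector_derivative v) (at x within T)"
  shows "(g has_vector_derivative v) (at x within S \<union> T)"
  using assms unfolding has_vector_derivative_def has_derivative_within by (auto intro: Lim_Un)

lemma has_vector_derivative_within_Icc_outside:
  fixes g :: "real \<Rightarrow> 'a::real_normed_vector"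
  assumes "x \<notin> {a..b}"
  shows "(g has_vector_derivative v) (at x within {a..b})"
proof -
  have "\<not> x islimpt {a..b}"
    using assms by (meson closed_atLeastAtMost closed_limpt)
  then have "at x within {a..b} = bot" by (simp add: trivial_limit_within)
  then show ?thesis
    unfolding has_vector_derivative_def has_derivative_at_within by (simp add: bounded_linear_scaleR_left)
qed

lemma continuous_within_Un:
  assumes "continuous (at x within S) g" "continuous (at x within T) g"
  shows "continuous (at x within S \<union> T) g"
  using assms unfolding continuous_within by (rule Lim_Un)

lemma sol_in_subinterval:
  assumes "sol_in V S \<gamma> a b" "a \<le> c" "c \<le> d" "d \<le> b"
  shows "sol_in V S \<gamma> c d"
  using assms unfolding sol_in_def
  by (auto intro: has_vector_derivative_within_subset[where S="{a..b}"])

lemma sol_in_change_set: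
  assumes "sol_in V S \<gamma> a b" "\<And>t. t \<in> {a..b} \<Longrightarrow> \<gamma> t \<in> S'"
  shows "sol_in V S' \<gamma> a b"
  using assms unfolding sol_in_def by auto

lemma sol_in_join:
  assumes "sol_in V S \<gamma> a b" "sol_in V S \<gamma> b c"
  shows "sol_in V S \<gamma> a c"
  unfolding sol_in_def
proof (intro conjI ballI)
  show "a \<le> c" using assms by (auto simp: sol_in_def)
  fix t assume t: "t \<in> {a..c}"
  show "\<gamma> t \<in> S" using assms t by (cases "t \<le> b") (auto simp: sol_in_def)
  have "{a..c} = {a..b} \<union> {b..c}" using assms by (auto simp: sol_in_def)
  moreover have "(\<gamma> has_vector_derivative V (\<gamma> t)) (at t within {a..b})"
    using assms t by (cases "t \<le> b") (auto simp: sol_in_def intro: has_vector_derivative_within_Icc_outside)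
  moreover have "(\<gamma> has_vector_derivative V (\<gamma> t)) (at t within {b..c})"
    using assms t by (cases "b \<le> t") (auto simp: sol_in_def intro: has_vector_derivative_within_Icc_outside)
  ultimately show "(\<gamma> has_vector_derivative V (\<gamma> t)) (at t within {a..c})"
    by (metis has_vector_derivative_within_Un)
qed

lemma sol_in_join_chain:
  assumes "\<And>j. a \<le> j \<Longrightarrow> j < b \<Longrightarrow> sol_in V S \<gamma> (\<tau> j) (\<tau> (Suc j))" "a < b"
  shows "sol_in V S \<gamma> (\<tau> a) (\<tau> b)"
  using assms
proof (induction b)
  case 0 then show ?case by simp
next
  case (Suc b)
  show ?case
  proof (cases "a = b")
    case True then show ?thesis using Suc.prems by auto
  next
    case False
    then show ?thesis using Suc by (auto intro: sol_in_join)
  qed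
qed

lemma sol_in_shift:
  assumes "sol_in V S \<gamma> a b"
  shows "sol_in V S (\<lambda>s. \<gamma> (s + c)) (a - c) (b - c)"
  unfolding sol_in_def
proof (intro conjI ballI)
  show "a - c \<le> b - c" using assms by (auto simp: sol_in_def)
  fix t assume "t \<in> {a - c..b - c}"
  then have tc: "t + c \<in> {a..b}" by auto
  then show "\<gamma> (t + c) \<in> S" using assms by (auto simp: sol_in_def)
  have im: "(\<lambda>s. s + c) ` {a - c..b - c} = {a..b}"
    by (auto simp: image_iff intro!: bexI[where x="_ - c"])
  have "((\<lambda>s. s + c) has_vector_derivative 1) (at t within {a - c..b - c})"
    by (auto intro!: derivative_eq_intros)
  moreover have "(\<gamma> has_vector_derivative V (\<gamma> (t + c))) (at (t + c) within (\<lambda>s. s + c) ` {a - c..b - c})"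
    using assms tc im by (auto simp: sol_in_def)
  ultimately show "((\<lambda>s. \<gamma> (s + c)) has_vector_derivative V (\<gamma> (t + c))) (at t within {a - c..b - c})"
    by (rule vector_diff_chain_within[THEN has_vector_derivative_eq_rhs, unfolded o_def]) simp
qed

lemma sol_in_of_one_sided:
  assumes "b < e"
    and in_S: "\<And>t. t \<in> {b..e} \<Longrightarrow> \<gamma> t \<in> S"
    and left: "\<And>t. b < t \<Longrightarrow> t \<le> e \<Longrightarrow> \<exists>\<epsilon>>0. (\<gamma> has_vector_derivative V (\<gamma> t)) (at t within {t - \<epsilon>..t})"
    and right: "\<And>t. b \<le> t \<Longrightarrow> t < e \<Longrightarrow> \<exists>\<epsilon>>0. (\<gamma> has_vector_derivative V (\<gamma> t)) (at t within {t..t + \<epsilon>})"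
  shows "sol_in V S \<gamma> b e"
  unfolding sol_in_def
proof (intro conjI ballI)
  fix t assume t: "t \<in> {b..e}"
  consider "t = b" | "t = e" | "b < t" "t < e" using t by fastforce
  then show "(\<gamma> has_vector_derivative V (\<gamma> t)) (at t within {b..e})"
  proof cases
    case 1
    then obtain \<epsilon> where "\<epsilon> > 0" "(\<gamma> has_vector_derivative V (\<gamma> b)) (at b within {b..b + \<epsilon>})"
      using right[of b] \<open>b < e\<close> by blast
    then show ?thesis using 1 \<open>b < e\<close> by (simp add: at_within_Icc_at_right)
  next
    case 2
    then obtain \<epsilon> where "\<epsilon> > 0" "(\<gamma> has_vector_derivative V (\<gamma> e)) (at e within {e - \<epsilon>..e})"
      using left[of e] \<open>b < e\<close> by blast
    then show ?thesis using 2 \<open>b < e\<close> by (simp add: at_within_Icc_at_left)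
  next
    case 3
    obtain \<epsilon>1 where \<epsilon>1: "\<epsilon>1 > 0" "(\<gamma> has_vector_derivative V (\<gamma> t)) (at t within {t - \<epsilon>1..t})"
      using left[of t] 3 by auto
    obtain \<epsilon>2 where \<epsilon>2: "\<epsilon>2 > 0" "(\<gamma> has_vector_derivative V (\<gamma> t)) (at t within {t..t + \<epsilon>2})"
      using right[of t] 3 by auto
    have "(\<gamma> has_vector_derivative V (\<gamma> t)) (at t within {t - \<epsilon>1..t} \<union> {t..t + \<epsilon>2})"
      using \<epsilon>1 \<epsilon>2 by (intro has_vector_derivative_within_Un)
    moreover have "{t - \<epsilon>1..t} \<union> {t..t + \<epsilon>2} = {t - \<epsilon>1..t + \<epsilon>2}" using \<epsilon>1 \<epsilon>2 by auto
    ultimately have "(\<gamma> has_vector_derivative V (\<gamma> t)) (at t)"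
      using \<epsilon>1 \<epsilon>2 by (simp add: at_within_Icc_at)
    then show ?thesis by (rule has_vector_derivative_at_within)
  qed
qed (use assms in auto)

lemma fst_of_sol_in:
  assumes "sol_in V S \<eta> a b" "\<And>z. fst (V z) = c"
  shows "fst (\<eta> b) = fst (\<eta> a) + c * (b - a)"
proof -
  have "((\<lambda>t. fst (\<eta> t) - c * t) has_field_derivative 0) (at t within {a..b})" if "t \<in> {a..b}" for t
  proof -
    have "((\<lambda>t. fst (\<eta> t)) has_vector_derivative c) (at t within {a..b})"
      using assms that has_derivative_fst unfolding sol_in_def has_vector_derivative_def by fastforce
    then show ?thesis
      by (auto intro!: derivative_eq_intros simp: has_real_derivative_iff_has_vector_derivative[symmetric])
  qed
  then obtain d where "\<forall>t\<in>{a..b}. fst (\<eta> t) - c * t = d"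
    using has_field_derivative_zero_constant[of "{a..b}" "\<lambda>t. fst (\<eta> t) - c * t"] by blast
  then show ?thesis using assms(1) by (auto simp: sol_in_def algebra_simps)
qed

lemma pos_of_no_zero_between:
  fixes g :: "real \<Rightarrow> real"
  assumes "continuous_on {a..b} g" "\<And>s. a < s \<Longrightarrow> s < b \<Longrightarrow> g s \<noteq> 0"
    and "s \<in> {a<..<b}" "t \<in> {a<..<b}" "0 < g s"
  shows "0 < g t"
proof (rule ccontr)
  assume "\<not> 0 < g t"
  have "connected (g ` {a<..<b})"
    by (intro connected_continuous_image connected_Ioo continuous_on_subset[OF assms(1)]) auto
  then have "0 \<in> g ` {a<..<b}"
    using connectedD_interval[of _ "g t" "g s" 0] \<open>\<not> 0 < g t\<close> assms(3-5) by fastforce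
  then show False using assms(2) by auto
qed

lemma smooth_has_derivative:
  assumes "smooth g"
  shows "(g has_derivative frechet_derivative g (at x)) (at x)"
proof -
  have "Ck (Suc 0) g" using assms unfolding smooth_def by blast
  then show ?thesis by (simp add: differentiable_on_def frechet_derivative_works)
qed

lemma smooth_continuous_on: "smooth g \<Longrightarrow> continuous_on S g"
  unfolding smooth_def by (metis Ck.simps(1) continuous_on_subset subset_UNIV)

lemma smooth_lipschitz_on_cball:
  fixes V :: "'a::euclidean_space \<Rightarrow> 'b::real_normed_vector"
  assumes "smooth V"
  obtains L where "L-lipschitz_on (cball 0 R) V"
proof -
  define D where "D x = frechet_derivative V (at x)" for x
  have deriv: "(V has_derivative D x) (at x)" for x
    unfolding D_def by (rule smooth_has_derivative[OF assms])
  have "Ck (Suc (Suc 0)) V" using assms unfolding smooth_def by blast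
  then have "continuous_on UNIV (\<lambda>x. D x v)" for v
    unfolding D_def by (auto intro: differentiable_imp_continuous_on)
  then have "continuous_on (cball 0 R) (\<lambda>x. \<Sum>i\<in>Basis. norm (D x i))"
    by (intro continuous_on_sum continuous_on_norm) (auto intro: continuous_on_subset)
  then have "bounded ((\<lambda>x. \<Sum>i\<in>Basis. norm (D x i)) ` cball 0 R)"
    by (intro compact_imp_bounded compact_continuous_image compact_cball)
  then obtain B where B: "\<And>x. x \<in> cball 0 R \<Longrightarrow> (\<Sum>i\<in>Basis. norm (D x i)) \<le> B"
    unfolding bounded_real by (meson abs_le_D1 imageI)
  have "onorm (D x) \<le> max B 0" if "x \<in> cball 0 R" for x
    using onorm_componentwise_le[OF has_derivative_bounded_linear[OF deriv]] B[OF that] by simp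
  then have "(max B 0)-lipschitz_on (cball 0 R) V"
    by (intro bounded_derivative_imp_lipschitz) (auto intro: has_derivative_at_withinI[OF deriv])
  then show ?thesis by (rule that)
qed

lemma Lie_along_solution:
  assumes f: "smooth f" and "sol_in V S \<gamma> a b" "t \<in> {a..b}"
  shows "((\<lambda>s. f (\<gamma> s)) has_real_derivative Lie V f (\<gamma> t)) (at t within {a..b})"
proof -
  let ?D = "frechet_derivative f (at (\<gamma> t))"
  have fd: "(f has_derivative ?D) (at (\<gamma> t) within \<gamma> ` {a..b})"
    using smooth_has_derivative[OF f] by (rule has_derivative_at_withinI)
  have gd: "(\<gamma> has_derivative (\<lambda>h. h *\<^sub>R V (\<gamma> t))) (at t within {a..b})"
    using assms(2,3) by (simp add: sol_in_def has_vector_derivative_def)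
  have "linear ?D" using smooth_has_derivative[OF f] by (rule has_derivative_linear)
  then have "?D \<circ> (\<lambda>h. h *\<^sub>R V (\<gamma> t)) = (\<lambda>h. h * ?D (V (\<gamma> t)))"
    by (auto simp: o_def linear_cmul)
  then have "((\<lambda>s. f (\<gamma> s)) has_derivative (\<lambda>h. h * ?D (V (\<gamma> t)))) (at t within {a..b})"
    using diff_chain_within[OF gd fd] by (simp add: o_def)
  then show ?thesis by (simp add: Lie_def has_field_derivative_def mult.commute[of _ "?D _"])
qed

subsection \<open>Uniqueness of solutions\<close>

lemma nonincreasing_of_deriv_within:
  fixes g :: "real \<Rightarrow> real"
  assumes deriv: "\<And>s. s \<in> {a..b} \<Longrightarrow> (g has_real_derivative g' s) (at s within {a..b})"
    and nonpos: "\<And>s. s \<in> {a..b} \<Longrightarrow> g' s \<le> 0" and "a \<le> x" "x \<le> y" "y \<le> b"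
  shows "g y \<le> g x"
proof -
  have "continuous_on {a..b} g" using deriv by (rule DERIV_continuous_on)
  then have "continuous_on {x..y} g" by (rule continuous_on_subset) (use assms in auto)
  moreover have "\<exists>d. (g has_real_derivative d) (at z) \<and> d \<le> 0" if "x < z" "z < y" for z
    using deriv[of z] nonpos[of z] that assms by (auto simp: at_within_Icc_at)
  ultimately show ?thesis using DERIV_nonpos_imp_decreasing_open[OF \<open>x \<le> y\<close>] by blast
qed

text \<open>Gronwall: \<open>exp (- C s) q s\<close> decreases and \<open>exp (C s) q s\<close> increases.\<close>

lemma vanishing_of_deriv_bounded_by_self:
  fixes q :: "real \<Rightarrow> real"
  assumes dq: "\<And>s. s \<in> {a..b} \<Longrightarrow> (q has_real_derivative q' s) (at s within {a..b})"
    and bound: "\<And>s. s \<in> {a..b} \<Longrightarrow> \<bar>q' s\<bar> \<le> C * q s"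
    and nonneg: "\<And>s. 0 \<le> q s" and t0: "t0 \<in> {a..b}" "q t0 = 0" and t: "t \<in> {a..b}"
  shows "q t = 0"
proof -
  have "q t \<le> 0"
  proof (cases "t0 \<le> t")
    case True
    have "exp (- C * t) * q t \<le> exp (- C * t0) * q t0"
    proof (rule nonincreasing_of_deriv_within[where g = "\<lambda>s. exp (- C * s) * q s"])
      fix s assume s: "s \<in> {a..b}"
      show "((\<lambda>s. exp (- C * s) * q s) has_real_derivative exp (- C * s) * (q' s - C * q s)) (at s within {a..b})"
        by (auto intro!: derivative_eq_intros dq[OF s] simp: algebra_simps)
      show "exp (- C * s) * (q' s - C * q s) \<le> 0"
        using bound[OF s] by (intro mult_nonneg_nonpos) auto
    qed (use t0 t True in auto)
    then show ?thesis using t0 by (simp add: mult_le_0_iff)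
  next
    case False
    have "- (exp (C * t0) * q t0) \<le> - (exp (C * t) * q t)"
    proof (rule nonincreasing_of_deriv_within[where g = "\<lambda>s. - (exp (C * s) * q s)"])
      fix s assume s: "s \<in> {a..b}"
      show "((\<lambda>s. - (exp (C * s) * q s)) has_real_derivative - (exp (C * s) * (q' s + C * q s))) (at s within {a..b})"
        by (auto intro!: derivative_eq_intros dq[OF s] simp: algebra_simps)
      show "- (exp (C * s) * (q' s + C * q s)) \<le> 0"
        using bound[OF s] by simp
    qed (use t0 t False in auto)
    then show ?thesis using t0 by (simp add: mult_le_0_iff)
  qed
  then show ?thesis using nonneg[of t] by simp
qed

lemma ode_solutions_unique:
  fixes u w :: "real \<Rightarrow> 'a::euclidean_space"
  assumes V: "smooth V"
    and du: "\<And>t. t \<in> {a..b} \<Longrightarrow> (u has_vector_derivative V (u t)) (at t within {a..b})"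
    and dw: "\<And>t. t \<in> {a..b} \<Longrightarrow> (w has_vector_derivative V (w t)) (at t within {a..b})"
    and t0: "t0 \<in> {a..b}" "u t0 = w t0" and t: "t \<in> {a..b}"
  shows "u t = w t"
proof -
  have "continuous_on {a..b} u" "continuous_on {a..b} w"
    by (rule continuous_on_vector_derivative, erule du, rule continuous_on_vector_derivative, erule dw)
  then have "bounded (u ` {a..b} \<union> w ` {a..b})"
    unfolding bounded_Un by (intro conjI compact_imp_bounded compact_continuous_image compact_Icc)
  then obtain R where R: "\<And>s. s \<in> {a..b} \<Longrightarrow> u s \<in> cball 0 R \<and> w s \<in> cball 0 R"
    unfolding bounded_iff mem_cball_0 by (meson UnCI image_eqI)
  obtain L where L: "L-lipschitz_on (cball 0 R) V" using smooth_lipschitz_on_cball[OF V] .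
  define q where "q s = (u s - w s) \<bullet> (u s - w s)" for s
  define q' where "q' s = 2 * ((u s - w s) \<bullet> (V (u s) - V (w s)))" for s
  have dq: "(q has_real_derivative q' s) (at s within {a..b})" if "s \<in> {a..b}" for s
  proof -
    have "((\<lambda>s. u s - w s) has_vector_derivative V (u s) - V (w s)) (at s within {a..b})"
      using du dw that by (intro derivative_intros)
    then have "(q has_derivative (\<lambda>h. (u s - w s) \<bullet> (h *\<^sub>R (V (u s) - V (w s)))
        + (h *\<^sub>R (V (u s) - V (w s))) \<bullet> (u s - w s))) (at s within {a..b})"
      unfolding q_def has_vector_derivative_def by (intro has_derivative_inner)
    then show ?thesis unfolding has_field_derivative_def
      by (rule has_derivative_eq_rhs) (auto simp: fun_eq_iff q'_def inner_commute)
  qed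
  have q'_bound: "\<bar>q' s\<bar> \<le> (2 * L) * q s" if "s \<in> {a..b}" for s
  proof -
    have "\<bar>(u s - w s) \<bullet> (V (u s) - V (w s))\<bar> \<le> norm (u s - w s) * norm (V (u s) - V (w s))"
      by (rule Cauchy_Schwarz_ineq2)
    also have "\<dots> \<le> norm (u s - w s) * (L * norm (u s - w s))"
      using lipschitz_on_normD[OF L] R[OF that] by (intro mult_left_mono) auto
    finally show ?thesis
      by (simp add: q_def q'_def abs_mult power2_norm_eq_inner[symmetric] power2_eq_square mult.left_commute)
  qed
  have "q t = 0"
    by (rule vanishing_of_deriv_bounded_by_self[OF dq q'_bound _ t0(1) _ t]) (use t0(2) in \<open>simp_all add: q_def\<close>)
  then show ?thesis by (simp add: q_def)
qed

lemma sol_in_unique: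
  assumes "smooth V" "sol_in V S1 \<gamma>1 b1 e1" "sol_in V S2 \<gamma>2 b2 e2"
    and "0 \<le> l" "l \<le> e1 - b1" "l \<le> e2 - b2"
    and "s0 \<in> {0..l}" "\<gamma>1 (s0 + b1) = \<gamma>2 (s0 + b2)" and "s \<in> {0..l}"
  shows "\<gamma>1 (s + b1) = \<gamma>2 (s + b2)"
proof -
  have "sol_in V S1 (\<lambda>s. \<gamma>1 (s + b1)) 0 l" "sol_in V S2 (\<lambda>s. \<gamma>2 (s + b2)) 0 l"
    using sol_in_shift[OF assms(2), of b1] sol_in_shift[OF assms(3), of b2] assms(4-6)
    by (auto intro: sol_in_subinterval)
  then show ?thesis
    using ode_solutions_unique[OF assms(1) _ _ assms(7) _ assms(9), of "\<lambda>s. \<gamma>1 (s + b1)" "\<lambda>s. \<gamma>2 (s + b2)"]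
      assms(8) unfolding sol_in_def by auto
qed

text \<open>Two arcs of the same field that meet a set \<open>E\<close> exactly at their endpoints and share
  one endpoint share the other one: the shorter arc, continued by uniqueness along the longer
  one, would otherwise meet \<open>E\<close> in the interior of the longer one.\<close>

lemma arcs_common_end_imp_common_start:
  assumes V: "smooth V" and arcs: "sol_in V S1 \<gamma> b1 e1" "sol_in V S2 \<gamma> b2 e2" "b1 < e1" "b2 < e2"
    and ends: "\<gamma> b1 \<in> E" "\<gamma> b2 \<in> E" "\<gamma> e1 = \<gamma> e2"
    and inner: "\<And>s. b1 < s \<Longrightarrow> s < e1 \<Longrightarrow> \<gamma> s \<notin> E" "\<And>s. b2 < s \<Longrightarrow> s < e2 \<Longrightarrow> \<gamma> s \<notin> E"
  shows "\<gamma> b1 = \<gamma> b2"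
proof -
  have shorter: "\<gamma> b = \<gamma> b'"
    if arcs: "sol_in V S \<gamma> b e" "sol_in V S' \<gamma> b' e'" "b < e" "e - b \<le> e' - b'"
      and ends: "\<gamma> b \<in> E" "\<gamma> e = \<gamma> e'" and inner: "\<And>s. b' < s \<Longrightarrow> s < e' \<Longrightarrow> \<gamma> s \<notin> E"
    for S b e S' b' e'
  proof -
    have tail: "sol_in V S' \<gamma> (e' - (e - b)) e'" by (rule sol_in_subinterval[OF arcs(2)]) (use arcs in auto)
    have "\<gamma> (0 + b) = \<gamma> (0 + (e' - (e - b)))"
      by (rule sol_in_unique[OF V arcs(1) tail, of "e - b" "e - b" 0]) (use arcs ends in auto)
    moreover have "e' - (e - b) = b'"
      using inner[of "e' - (e - b)"] arcs ends \<open>\<gamma> (0 + b) = _\<close> by force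
    ultimately show ?thesis by simp
  qed
  show ?thesis
    using shorter[OF arcs(1,2)] shorter[OF arcs(2,1)] arcs ends inner by force
qed

lemma arcs_common_start_imp_common_end:
  assumes V: "smooth V" and arcs: "sol_in V S1 \<gamma> b1 e1" "sol_in V S2 \<gamma> b2 e2" "b1 < e1" "b2 < e2"
    and ends: "\<gamma> e1 \<in> E" "\<gamma> e2 \<in> E" "\<gamma> b1 = \<gamma> b2"
    and inner: "\<And>s. b1 < s \<Longrightarrow> s < e1 \<Longrightarrow> \<gamma> s \<notin> E" "\<And>s. b2 < s \<Longrightarrow> s < e2 \<Longrightarrow> \<gamma> s \<notin> E"
  shows "\<gamma> e1 = \<gamma> e2"
proof -
  have shorter: "\<gamma> e = \<gamma> e'"
    if arcs: "sol_in V S \<gamma> b e" "sol_in V S' \<gamma> b' e'" "b < e" "e - b \<le> e' - b'"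
      and ends: "\<gamma> e \<in> E" "\<gamma> b = \<gamma> b'" and inner: "\<And>s. b' < s \<Longrightarrow> s < e' \<Longrightarrow> \<gamma> s \<notin> E"
    for S b e S' b' e'
  proof -
    have "\<gamma> ((e - b) + b) = \<gamma> ((e - b) + b')"
      by (rule sol_in_unique[OF V arcs(1,2), of "e - b" 0 "e - b"]) (use arcs ends in auto)
    moreover have "(e - b) + b' = e'"
      using inner[of "(e - b) + b'"] arcs ends \<open>\<gamma> ((e - b) + b) = _\<close> by force
    ultimately show ?thesis by simp
  qed
  show ?thesis
    using shorter[OF arcs(1,2)] shorter[OF arcs(2,1)] arcs ends inner by force
qed

lemma deriv_nonneg_at_left_min:
  fixes g :: "real \<Rightarrow> real"
  assumes "(g has_real_derivative d) (at a within {a..b})" "a < b" "\<And>s. a < s \<Longrightarrow> s < b \<Longrightarrow> g a \<le> g s"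
  shows "0 \<le> d"
proof (rule tendsto_lowerbound)
  show "((\<lambda>s. (g s - g a) / (s - a)) \<longlongrightarrow> d) (at_right a)"
    using assms(1,2) by (simp add: has_field_derivative_iff at_within_Icc_at_right)
  show "\<forall>\<^sub>F s in at_right a. 0 \<le> (g s - g a) / (s - a)"
    using eventually_at_right_real[OF assms(2)] by eventually_elim (use assms(3) in auto)
qed simp

lemma deriv_nonpos_at_right_min:
  fixes g :: "real \<Rightarrow> real"
  assumes "(g has_real_derivative d) (at b within {a..b})" "a < b" "\<And>s. a < s \<Longrightarrow> s < b \<Longrightarrow> g b \<le> g s"
  shows "d \<le> 0"
proof (rule tendsto_upperbound)
  show "((\<lambda>s. (g s - g b) / (s - b)) \<longlongrightarrow> d) (at_left b)"
    using assms(1,2) by (simp add: has_field_derivative_iff at_within_Icc_at_left)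
  show "\<forall>\<^sub>F s in at_left b. (g s - g b) / (s - b) \<le> 0"
    using eventually_at_left_real[OF assms(2)] by eventually_elim (use assms(3) in \<open>auto intro: divide_nonneg_neg\<close>)
qed simp

lemma Lie_nonneg_at_start_Splus:
  assumes "smooth f" "sol_in V (Splus f) \<gamma> a b" "a < b" "\<gamma> a \<in> Sig f"
  shows "0 \<le> Lie V f (\<gamma> a)"
  using assms Lie_along_solution[OF assms(1,2), of a]
  by (intro deriv_nonneg_at_left_min[of "\<lambda>s. f (\<gamma> s)" _ a b]) (auto simp: sol_in_def Splus_def Sig_def)

lemma Lie_nonpos_at_end_Splus:
  assumes "smooth f" "sol_in V (Splus f) \<gamma> a b" "a < b" "\<gamma> b \<in> Sig f"
  shows "Lie V f (\<gamma> b) \<le> 0"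
  using assms Lie_along_solution[OF assms(1,2), of b]
  by (intro deriv_nonpos_at_right_min[of "\<lambda>s. f (\<gamma> s)" _ b a]) (auto simp: sol_in_def Splus_def Sig_def)

lemma Lie_nonpos_at_start_Sminus:
  assumes "smooth f" "sol_in V (Sminus f) \<gamma> a b" "a < b" "\<gamma> a \<in> Sig f"
  shows "Lie V f (\<gamma> a) \<le> 0"
proof -
  have "((\<lambda>s. - f (\<gamma> s)) has_real_derivative - Lie V f (\<gamma> a)) (at a within {a..b})"
    using assms by (intro DERIV_minus Lie_along_solution) (auto simp: sol_in_def)
  then have "0 \<le> - Lie V f (\<gamma> a)"
    by (rule deriv_nonneg_at_left_min) (use assms in \<open>auto simp: sol_in_def Sminus_def Sig_def\<close>)
  then show ?thesis by simp
qed

lemma Lie_nonneg_at_end_Sminus: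
  assumes "smooth f" "sol_in V (Sminus f) \<gamma> a b" "a < b" "\<gamma> b \<in> Sig f"
  shows "0 \<le> Lie V f (\<gamma> b)"
proof -
  have "((\<lambda>s. - f (\<gamma> s)) has_real_derivative - Lie V f (\<gamma> b)) (at b within {a..b})"
    using assms by (intro DERIV_minus Lie_along_solution) (auto simp: sol_in_def)
  then have "- Lie V f (\<gamma> b) \<le> 0"
    by (rule deriv_nonpos_at_right_min) (use assms in \<open>auto simp: sol_in_def Sminus_def Sig_def\<close>)
  then show ?thesis by simp
qed

lemma local_piece_Splus:
  assumes "local_piece X Y f \<gamma> a b" "s \<in> {a..b}" "0 < f (\<gamma> s)"
  shows "sol_in X (Splus f) \<gamma> a b"
proof -
  have "\<gamma> s \<notin> Sminus f" "\<gamma> s \<notin> ZT_dom X Y f" using assms(3) by (auto simp: Sminus_def ZT_dom_def Sig_def)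
  then show ?thesis using assms(1,2) unfolding local_piece_def sol_in_def by blast
qed

lemma local_piece_Sminus:
  assumes "local_piece X Y f \<gamma> a b" "s \<in> {a..b}" "f (\<gamma> s) < 0"
  shows "sol_in Y (Sminus f) \<gamma> a b"
proof -
  have "\<gamma> s \<notin> Splus f" "\<gamma> s \<notin> ZT_dom X Y f" using assms(3) by (auto simp: Splus_def ZT_dom_def Sig_def)
  then show ?thesis using assms(1,2) unfolding local_piece_def sol_in_def by blast
qed

lemma local_piece_continuous:
  "local_piece X Y f \<gamma> a b \<Longrightarrow> t \<in> {a..b} \<Longrightarrow> continuous (at t within {a..b}) \<gamma>"
  unfolding local_piece_def sol_in_def by (auto intro: has_vector_derivative_continuous)

lemma global_traj_continuous_on:
  assumes "global_traj X Y f \<gamma>"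
  shows "continuous_on S \<gamma>"
proof -
  have "isCont \<gamma> t" for t
  proof -
    obtain \<epsilon> where \<epsilon>: "\<epsilon> > 0" "local_piece X Y f \<gamma> (t - \<epsilon>) t" "local_piece X Y f \<gamma> t (t + \<epsilon>)"
      using assms unfolding global_traj_def by blast
    then have "continuous (at t within {t - \<epsilon>..t} \<union> {t..t + \<epsilon>}) \<gamma>"
      by (intro continuous_within_Un local_piece_continuous) auto
    moreover have "{t - \<epsilon>..t} \<union> {t..t + \<epsilon>} = {t - \<epsilon>..t + \<epsilon>}" using \<epsilon> by auto
    ultimately show ?thesis using \<epsilon> by (simp add: at_within_Icc_at)
  qed
  then show ?thesis by (simp add: continuous_at_imp_continuous_on)
qed

lemma global_traj_sol_in:
  assumes gt: "global_traj X Y f \<gamma>" and "b < e" "\<gamma> b \<in> S" "\<gamma> e \<in> S"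
    and forced: "\<And>a c s. local_piece X Y f \<gamma> a c \<Longrightarrow> s \<in> {a..c} \<Longrightarrow> b < s \<Longrightarrow> s < e \<Longrightarrow> sol_in V S \<gamma> a c"
  shows "sol_in V S \<gamma> b e"
proof (rule sol_in_of_one_sided[OF \<open>b < e\<close>])
  fix t assume t: "b < t" "t \<le> e"
  obtain \<epsilon> where \<epsilon>: "\<epsilon> > 0" "local_piece X Y f \<gamma> (t - \<epsilon>) t"
    using gt unfolding global_traj_def by blast
  have "t - min \<epsilon> (t - b) / 2 \<in> {t - \<epsilon>..t}" "b < t - min \<epsilon> (t - b) / 2" "t - min \<epsilon> (t - b) / 2 < e"
    using \<epsilon> t by (auto simp: min_def field_simps)
  then have "sol_in V S \<gamma> (t - \<epsilon>) t" using forced[OF \<epsilon>(2)] by blast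
  then show "\<exists>\<epsilon>>0. (\<gamma> has_vector_derivative V (\<gamma> t)) (at t within {t - \<epsilon>..t})"
    using \<epsilon>(1) unfolding sol_in_def by auto
next
  fix t assume t: "b \<le> t" "t < e"
  obtain \<epsilon> where \<epsilon>: "\<epsilon> > 0" "local_piece X Y f \<gamma> t (t + \<epsilon>)"
    using gt unfolding global_traj_def by blast
  have "t + min \<epsilon> (e - t) / 2 \<in> {t..t + \<epsilon>}" "b < t + min \<epsilon> (e - t) / 2" "t + min \<epsilon> (e - t) / 2 < e"
    using \<epsilon> t by (auto simp: min_def field_simps)
  then have "sol_in V S \<gamma> t (t + \<epsilon>)" using forced[OF \<epsilon>(2)] by blast
  then show "\<exists>\<epsilon>>0. (\<gamma> has_vector_derivative V (\<gamma> t)) (at t within {t..t + \<epsilon>})"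
    using \<epsilon>(1) unfolding sol_in_def by auto
next
  fix t assume t: "t \<in> {b..e}"
  obtain \<epsilon> where \<epsilon>: "\<epsilon> > 0" "local_piece X Y f \<gamma> t (t + \<epsilon>)"
    using gt unfolding global_traj_def by blast
  show "\<gamma> t \<in> S"
  proof (cases "b < t \<and> t < e")
    case True
    then have "sol_in V S \<gamma> t (t + \<epsilon>)" using forced[OF \<epsilon>(2), of t] \<epsilon>(1) by auto
    then show ?thesis using \<epsilon>(1) unfolding sol_in_def by auto
  qed (use t assms in auto)
qed

lemma global_traj_arc_Splus:
  assumes "global_traj X Y f \<gamma>" "b < e" "\<And>s. b < s \<Longrightarrow> s < e \<Longrightarrow> 0 < f (\<gamma> s)"
    "\<gamma> b \<in> Sig f" "\<gamma> e \<in> Sig f"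
  shows "sol_in X (Splus f) \<gamma> b e"
proof (rule global_traj_sol_in[OF assms(1,2)])
  show "\<gamma> b \<in> Splus f" "\<gamma> e \<in> Splus f" using assms(4,5) by (auto simp: Sig_def Splus_def)
  fix a c s assume piece: "local_piece X Y f \<gamma> a c" and s: "s \<in> {a..c}" "b < s" "s < e"
  show "sol_in X (Splus f) \<gamma> a c" using local_piece_Splus[OF piece s(1) assms(3)[OF s(2,3)]] .
qed

lemma global_traj_arc_Sminus:
  assumes "global_traj X Y f \<gamma>" "b < e" "\<And>s. b < s \<Longrightarrow> s < e \<Longrightarrow> f (\<gamma> s) < 0"
    "\<gamma> b \<in> Sig f" "\<gamma> e \<in> Sig f"
  shows "sol_in Y (Sminus f) \<gamma> b e"
proof (rule global_traj_sol_in[OF assms(1,2)])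
  show "\<gamma> b \<in> Sminus f" "\<gamma> e \<in> Sminus f" using assms(4,5) by (auto simp: Sig_def Sminus_def)
  fix a c s assume piece: "local_piece X Y f \<gamma> a c" and s: "s \<in> {a..c}" "b < s" "s < e"
  show "sol_in Y (Sminus f) \<gamma> a c" using local_piece_Sminus[OF piece s(1) assms(3)[OF s(2,3)]] .
qed

text \<open>If \<open>\<gamma> s = \<gamma> t\<close> with \<open>s < t\<close> off \<open>E\<close>, uniqueness gives \<open>\<gamma> (B - (t - s)) = \<gamma> B \<in> E\<close>,
  which injectivity on the \<open>E\<close>-times \<open>Z\<close> forbids.\<close>

lemma sol_in_inj_on:
  assumes V: "smooth V" and sol: "sol_in V S \<gamma> A B" and Z: "Z \<subseteq> {A..B}" "B \<in> Z"
    and E_times: "\<And>s. s \<in> {A..B} \<Longrightarrow> \<gamma> s \<in> E \<Longrightarrow> s \<in> Z" "\<And>s. s \<in> Z \<Longrightarrow> \<gamma> s \<in> E"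
    and inj: "inj_on \<gamma> Z"
  shows "inj_on \<gamma> {A..B}"
proof -
  have False if st: "s \<in> {A..B}" "t \<in> {A..B}" "s < t" "\<gamma> s = \<gamma> t" "\<gamma> s \<notin> E" for s t
  proof -
    have "sol_in V S \<gamma> s B" "sol_in V S \<gamma> t B" using st by (auto intro: sol_in_subinterval[OF sol])
    from sol_in_unique[OF V this, of "B - t" 0 "B - t"]
    have "\<gamma> ((B - t) + s) = \<gamma> ((B - t) + t)" using st by auto
    moreover have "B - t + s \<in> {A..B}" using st by auto
    ultimately have "B - t + s \<in> Z" using E_times Z by auto
    then show False using inj_onD[OF inj, of "B - t + s" B] Z st \<open>\<gamma> (B - t + s) = _\<close> by simp
  qed
  then show ?thesis
    by (intro inj_onI) (metis E_times(1) inj inj_onD linorder_neqE_linordered_idom)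
qed

lemma reach_along_injective_arc:
  assumes V: "smooth V" and sol: "sol_in V S \<gamma> A B" and inj: "inj_on \<gamma> {A..B}"
    and stuck: "\<And>\<eta> s0 s1. s0 < s1 \<Longrightarrow> sol_in V (\<gamma> ` {A..B}) \<eta> s0 s1 \<Longrightarrow> \<eta> s0 \<noteq> \<gamma> B"
    and t: "t1 \<in> {A..B}" "t2 \<in> {A..B}"
  shows "reach V (\<gamma> ` {A..B}) (\<gamma> t1) (\<gamma> t2) \<longleftrightarrow> t1 \<le> t2"
proof
  assume "reach V (\<gamma> ` {A..B}) (\<gamma> t1) (\<gamma> t2)"
  then obtain T \<eta> where \<eta>: "T \<ge> 0" "\<eta> 0 = \<gamma> t1" "\<eta> T = \<gamma> t2" "sol_in V (\<gamma> ` {A..B}) \<eta> 0 T"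
    unfolding reach_def by blast
  have tail: "sol_in V S \<gamma> t1 B" by (rule sol_in_subinterval[OF sol]) (use t in auto)
  show "t1 \<le> t2"
  proof (cases "T \<le> B - t1")
    case True
    have "\<eta> (T + 0) = \<gamma> (T + t1)"
      by (rule sol_in_unique[OF V \<eta>(4) tail, of T 0]) (use True \<eta> t in auto)
    then have "t2 = T + t1" using inj_onD[OF inj, of t2 "T + t1"] True \<eta> t by auto
    then show ?thesis using \<eta> by simp
  next
    case False
    have "\<eta> ((B - t1) + 0) = \<gamma> ((B - t1) + t1)"
      by (rule sol_in_unique[OF V \<eta>(4) tail, of "B - t1" 0]) (use False \<eta> t in auto)
    moreover have "sol_in V (\<gamma> ` {A..B}) \<eta> (B - t1) T"
      by (rule sol_in_subinterval[OF \<eta>(4)]) (use False t in auto)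
    ultimately show ?thesis using stuck[of "B - t1" T \<eta>] False by simp
  qed
next
  assume le: "t1 \<le> t2"
  have "sol_in V S (\<lambda>s. \<gamma> (s + t1)) 0 (t2 - t1)"
    using sol_in_shift[OF sol_in_subinterval[OF sol, of t1 t2], of t1] t le by auto
  then have "sol_in V (\<gamma> ` {A..B}) (\<lambda>s. \<gamma> (s + t1)) 0 (t2 - t1)"
    by (rule sol_in_change_set) (use t in auto)
  then show "reach V (\<gamma> ` {A..B}) (\<gamma> t1) (\<gamma> t2)"
    unfolding reach_def using le by (intro exI[of _ "t2 - t1"]) (auto intro!: exI[of _ "\<lambda>s. \<gamma> (s + t1)"])
qed

subsection \<open>Piecewise linear interpolation\<close>

lemma strict_mono_on_atMost_Suc:
  fixes x :: "nat \<Rightarrow> 'a::order"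
  assumes "\<And>j. j < N \<Longrightarrow> x j < x (Suc j)"
  shows "strict_mono_on {..N} x"
proof (rule strict_mono_onI)
  fix j l assume "j \<in> {..N}" "l \<in> {..N}" "j < l"
  then show "x j < x l"
  proof (induction l)
    case (Suc l)
    then show ?case using assms[of l] by (cases "j = l") (auto intro: order.strict_trans)
  qed simp
qed

lemma strict_mono_on_cover:
  fixes x :: "nat \<Rightarrow> real"
  assumes "\<And>j. j < N \<Longrightarrow> x j < x (Suc j)" "x 0 \<le> t" "t \<le> x N"
  shows "\<exists>j\<le>N. t = x j \<or> (j < N \<and> x j < t \<and> t < x (Suc j))"
  using assms(2,3)
proof (induction N)
  case (Suc N)
  show ?case
  proof (cases "t \<le> x N")
    case True
    then show ?thesis using Suc assms(1) by (metis less_SucI le_SucI)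
  next
    case False
    then show ?thesis using Suc.prems by (cases "t = x (Suc N)") (auto intro: exI[of _ N])
  qed
qed auto

fun pl_interp :: "(nat \<Rightarrow> real) \<Rightarrow> (nat \<Rightarrow> real) \<Rightarrow> nat \<Rightarrow> real \<Rightarrow> real" where
  "pl_interp x y 0 s = y 0"
| "pl_interp x y (Suc N) s =
    (if s \<le> x N then pl_interp x y N s else y N + (s - x N) * (y (Suc N) - y N) / (x (Suc N) - x N))"

lemma pl_interp_node:
  assumes "strict_mono_on {..N} x" "j \<le> N"
  shows "pl_interp x y N (x j) = y j"
  using assms
proof (induction N)
  case (Suc N)
  have mono: "strict_mono_on {..N} x" using Suc.prems(1) by (rule monotone_on_subset) auto
  show ?case
  proof (cases "j = Suc N")
    case True
    then have "\<not> x j \<le> x N" using strict_mono_onD[OF Suc.prems(1), of N "Suc N"] by auto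
    then show ?thesis using True strict_mono_onD[OF Suc.prems(1), of N "Suc N"] by simp
  next
    case False
    then have "x j \<le> x N" using Suc.prems strict_mono_on_leD[OF mono, of j N] by auto
    then show ?thesis using Suc.IH[OF mono] Suc.prems False by simp
  qed
qed simp

lemma pl_interp_continuous_on:
  assumes "strict_mono_on {..N} x"
  shows "continuous_on S (pl_interp x y N)"
  using assms
proof (induction N arbitrary: S)
  case (Suc N)
  have mono: "strict_mono_on {..N} x" using Suc.prems by (rule monotone_on_subset) auto
  have "continuous_on UNIV (pl_interp x y (Suc N))"
    unfolding pl_interp.simps
  proof (rule continuous_on_cases_le)
    show "continuous_on {s \<in> UNIV. s \<le> x N} (pl_interp x y N)" using Suc.IH[OF mono] .
    show "continuous_on {s \<in> UNIV. x N \<le> s} (\<lambda>s. y N + (s - x N) * (y (Suc N) - y N) / (x (Suc N) - x N))"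
      using strict_mono_onD[OF Suc.prems, of N "Suc N"] by (intro continuous_intros) auto
    show "s = x N \<Longrightarrow> pl_interp x y N s = y N + (s - x N) * (y (Suc N) - y N) / (x (Suc N) - x N)" for s
      using pl_interp_node[OF mono, of N y] by simp
  qed (intro continuous_intros)
  then show ?case by (rule continuous_on_subset) simp
qed simp

lemma pl_interp_strict_mono_on:
  assumes "strict_mono_on {..N} x" "strict_mono_on {..N} y"
  shows "strict_mono_on {x 0..x N} (pl_interp x y N)"
  using assms
proof (induction N)
  case (Suc N)
  have mono: "strict_mono_on {..N} x" "strict_mono_on {..N} y"
    using Suc.prems by (auto intro: monotone_on_subset)
  have step: "x N < x (Suc N)" "y N < y (Suc N)"
    using Suc.prems by (auto dest: strict_mono_onD[of _ _ N "Suc N"])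
  have IH: "pl_interp x y N s < pl_interp x y N t" if "x 0 \<le> s" "s < t" "t \<le> x N" for s t
    using strict_mono_onD[OF Suc.IH[OF mono], of s t] that by auto
  have below: "pl_interp x y N s \<le> y N" if "x 0 \<le> s" "s \<le> x N" for s
    using IH[of s "x N"] pl_interp_node[OF mono(1), of N y] that by (cases "s = x N") auto
  show ?case
  proof (rule strict_mono_onI)
    fix s t assume "s \<in> {x 0..x (Suc N)}" "t \<in> {x 0..x (Suc N)}" "s < t"
    then show "pl_interp x y (Suc N) s < pl_interp x y (Suc N) t"
      using IH[of s t] below[of s] step
      by (auto simp: divide_strict_right_mono mult_strict_right_mono
          intro: order.strict_trans1[of _ "y N"] divide_pos_pos mult_pos_pos)
  qed
qed (simp add: monotone_on_def)

declare pl_interp.simps [simp del] \<comment> \<open>otherwise \<open>simp\<close> unfolds \<open>pl_interp x y (n+1)\<close>, normalised to \<open>Suc n\<close>\<close>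

lemma continuous_strict_mono_on_image_Icc:
  fixes \<phi> :: "real \<Rightarrow> real"
  assumes "continuous_on {a..b} \<phi>" "strict_mono_on {a..b} \<phi>" "a \<le> b"
  shows "\<phi> ` {a..b} = {\<phi> a..\<phi> b}"
proof
  show "\<phi> ` {a..b} \<subseteq> {\<phi> a..\<phi> b}"
    using assms(3) by (auto intro!: strict_mono_on_leD[OF assms(2)])
  show "{\<phi> a..\<phi> b} \<subseteq> \<phi> ` {a..b}"
    using IVT'[of \<phi> a _ b] assms(1,3) by (force simp: image_iff)
qed

subsection \<open>The model field\<close>

definition model_ivl :: "nat \<Rightarrow> real set" where
  "model_ivl k = {(1 - real k) / 2..(real k - 1) / 2}"

definition upper_branch :: "nat \<Rightarrow> pt set" where
  "upper_branch k = (\<lambda>x. (x, Pk k x)) ` model_ivl k"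

definition lower_branch :: "nat \<Rightarrow> pt set" where
  "lower_branch k = (\<lambda>x. (x, - Pk k x)) ` model_ivl k"

text \<open>The zeros of \<open>Pk k\<close> in increasing order: the two simple ones at the ends of
  \<open>model_ivl k\<close> and the double ones \<open>j - k/2\<close> in between.\<close>

definition Pk_root :: "nat \<Rightarrow> nat \<Rightarrow> real" where
  "Pk_root k j = (if j = 0 then (1 - real k) / 2 else if j = k then (real k - 1) / 2 else real j - real k / 2)"

lemma Lk_eq_branches: "Lk k = upper_branch k \<union> lower_branch k"
  unfolding Lk_def upper_branch_def lower_branch_def model_ivl_def by auto

lemma model_ivl_uminus: "uminus ` model_ivl k = model_ivl k"
proof -
  have "- ((real k - 1) / 2) = (1 - real k) / 2" by (simp add: field_simps)
  moreover have "- ((1 - real k) / 2) = (real k - 1) / 2" by (simp add: field_simps)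
  ultimately show ?thesis unfolding model_ivl_def image_uminus_atLeastAtMost by presburger
qed

lemma Pk_nonneg:
  assumes "x \<in> model_ivl k"
  shows "0 \<le> Pk k x"
proof -
  have "(x + (real k - 1) / 2) * (x - (real k - 1) / 2) \<le> 0"
    using assms by (intro mult_nonneg_nonpos) (auto simp: model_ivl_def field_simps)
  moreover have "0 \<le> (\<Prod>i=1..k-1. (x - (real i - real k / 2))^2)"
    by (intro prod_nonneg) auto
  ultimately show ?thesis unfolding Pk_def by (simp add: mult_nonpos_nonneg)
qed

lemma Pk_eq_0_iff:
  assumes "2 \<le> k" "x \<in> model_ivl k"
  shows "Pk k x = 0 \<longleftrightarrow> (\<exists>j\<le>k. x = Pk_root k j)"
proof
  assume "Pk k x = 0"
  then have "x = - ((real k - 1) / 2) \<or> x = (real k - 1) / 2 \<or> (\<exists>i\<in>{1..k-1}. x = real i - real k / 2)"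
    unfolding Pk_def by auto
  then consider "x = - ((real k - 1) / 2)" | "x = (real k - 1) / 2" | i where "i \<in> {1..k-1}" "x = real i - real k / 2"
    by blast
  then show "\<exists>j\<le>k. x = Pk_root k j"
  proof cases
    case 1 then show ?thesis by (intro exI[of _ 0]) (simp add: Pk_root_def field_simps)
  next
    case 2 then show ?thesis using assms by (intro exI[of _ k]) (simp add: Pk_root_def)
  next
    case 3 then show ?thesis by (intro exI[of _ i]) (auto simp: Pk_root_def)
  qed
next
  assume "\<exists>j\<le>k. x = Pk_root k j"
  then obtain j where j: "j \<le> k" "x = Pk_root k j" by blast
  show "Pk k x = 0"
  proof (cases "j = 0 \<or> j = k")
    case True then show ?thesis using j unfolding Pk_def Pk_root_def by (auto simp: field_simps)
  next
    case False
    then have "j \<in> {1..k-1}" "x = real j - real k / 2" using j by (auto simp: Pk_root_def)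
    then show ?thesis unfolding Pk_def by (auto intro!: prod_zero bexI[of _ j])
  qed
qed

lemma Pk_root_strict_mono_on: "2 \<le> k \<Longrightarrow> strict_mono_on {..k} (Pk_root k)"
  by (rule strict_mono_on_atMost_Suc) (auto simp: Pk_root_def field_simps)

lemma Pk_root_ends: "Pk_root k 0 = (1 - real k) / 2" "1 \<le> k \<Longrightarrow> Pk_root k k = (real k - 1) / 2"
  by (auto simp: Pk_root_def)

lemma model_ivl_eq: "1 \<le> k \<Longrightarrow> model_ivl k = {Pk_root k 0..Pk_root k k}"
  by (simp add: model_ivl_def Pk_root_ends)

lemma Pk_root_in_model_ivl: "2 \<le> k \<Longrightarrow> j \<le> k \<Longrightarrow> Pk_root k j \<in> model_ivl k"
  by (auto simp: model_ivl_def Pk_root_def field_simps)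

lemma Pk_root_reflect: "1 \<le> k \<Longrightarrow> j \<le> k \<Longrightarrow> Pk_root k (k - j) = - Pk_root k j"
  by (auto simp: Pk_root_def field_simps)

lemma differentiable_prod:
  fixes g :: "'i \<Rightarrow> real \<Rightarrow> real"
  assumes "\<And>i. i \<in> I \<Longrightarrow> g i differentiable (at x)"
  shows "(\<lambda>x. \<Prod>i\<in>I. g i x) differentiable (at x)"
  using assms by (induction I rule: infinite_finite_induct) (auto intro!: differentiable_mult)

lemma Pk_has_derivative: "(Pk k has_real_derivative deriv (Pk k) x) (at x)"
proof -
  have "Pk k differentiable (at x)"
    unfolding Pk_def by (intro differentiable_minus differentiable_mult differentiable_prod
      differentiable_power differentiable_add differentiable_diff differentiable_ident differentiable_const)
  then show ?thesis by (simp add: DERIV_deriv_iff_real_differentiable)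
qed

lemma Pk_continuous_on: "continuous_on S (Pk k)"
  using Pk_has_derivative by (meson DERIV_continuous continuous_at_imp_continuous_on)

lemma compact_upper_branch: "compact (upper_branch k)"
  unfolding upper_branch_def model_ivl_def
  by (intro compact_continuous_image compact_Icc continuous_intros Pk_continuous_on)

lemma compact_lower_branch: "compact (lower_branch k)"
  unfolding lower_branch_def model_ivl_def
  by (intro compact_continuous_image compact_Icc continuous_intros Pk_continuous_on)

lemma Lk_Splus: "Lk k \<inter> Splus snd = upper_branch k"
  using Pk_nonneg[of _ k]
  by (force simp: Lk_eq_branches upper_branch_def lower_branch_def Splus_def image_iff)

lemma Lk_Sminus: "Lk k \<inter> Sminus snd = lower_branch k"
  using Pk_nonneg[of _ k]
  by (force simp: Lk_eq_branches upper_branch_def lower_branch_def Sminus_def image_iff)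

lemma Lk_Sig:
  assumes "2 \<le> k"
  shows "Lk k \<inter> Sig snd = (\<lambda>j. (Pk_root k j, 0)) ` {..k}"
proof -
  have "Lk k \<inter> Sig snd = (\<lambda>x. (x, 0)) ` {x \<in> model_ivl k. Pk k x = 0}"
    by (auto simp: Lk_eq_branches upper_branch_def lower_branch_def Sig_def image_iff)
  also have "{x \<in> model_ivl k. Pk k x = 0} = Pk_root k ` {..k}"
    using Pk_eq_0_iff[OF assms] Pk_root_in_model_ivl[OF assms] by fastforce
  finally show ?thesis by (simp add: image_image)
qed

lemma Lie_snd: "Lie W snd z = snd (W z)"
proof -
  have "(snd has_derivative snd) (at z)" by (rule has_derivative_snd[OF has_derivative_ident, simplified])
  then show ?thesis by (simp add: Lie_def frechet_derivative_at[symmetric])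
qed

lemma model_slide_esc_empty: "slide_esc (Xk k) (Yk k) snd = {}"
  unfolding slide_esc_def Lie_snd Xk_def Yk_def by (auto split: prod.splits)

lemma reach_upper_branch:
  assumes "x1 \<in> model_ivl k" "x2 \<in> model_ivl k"
  shows "reach (Xk k) (upper_branch k) (x1, Pk k x1) (x2, Pk k x2) \<longleftrightarrow> x1 \<le> x2"
proof
  assume "reach (Xk k) (upper_branch k) (x1, Pk k x1) (x2, Pk k x2)"
  then obtain T \<eta> where "T \<ge> 0" "\<eta> 0 = (x1, Pk k x1)" "\<eta> T = (x2, Pk k x2)" "sol_in (Xk k) (upper_branch k) \<eta> 0 T"
    unfolding reach_def by blast
  then show "x1 \<le> x2" using fst_of_sol_in[of "Xk k" _ \<eta> 0 T 1] by (simp add: Xk_def split_beta)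
next
  assume le: "x1 \<le> x2"
  have "sol_in (Xk k) (upper_branch k) (\<lambda>t. (x1 + t, Pk k (x1 + t))) 0 (x2 - x1)"
    unfolding sol_in_def
  proof (intro conjI ballI)
    fix t assume t: "t \<in> {0..x2 - x1}"
    show "(x1 + t, Pk k (x1 + t)) \<in> upper_branch k"
      using t assms by (auto simp: upper_branch_def model_ivl_def)
    have "((\<lambda>t. Pk k (x1 + t)) has_real_derivative deriv (Pk k) (x1 + t) * 1) (at t within {0..x2 - x1})"
      by (rule DERIV_chain2[OF Pk_has_derivative]) (auto intro!: derivative_eq_intros)
    then show "((\<lambda>t. (x1 + t, Pk k (x1 + t))) has_vector_derivative Xk k (x1 + t, Pk k (x1 + t)))
        (at t within {0..x2 - x1})"
      by (auto intro!: derivative_eq_intros simp: Xk_def has_real_derivative_iff_has_vector_derivative[symmetric])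
  qed (use le in auto)
  then show "reach (Xk k) (upper_branch k) (x1, Pk k x1) (x2, Pk k x2)"
    unfolding reach_def using le by (intro exI[of _ "x2 - x1"]) (auto intro!: exI[of _ "\<lambda>t. (x1 + t, Pk k (x1 + t))"])
qed

lemma reach_lower_branch:
  assumes "x1 \<in> model_ivl k" "x2 \<in> model_ivl k"
  shows "reach (Yk k) (lower_branch k) (x1, - Pk k x1) (x2, - Pk k x2) \<longleftrightarrow> x2 \<le> x1"
proof
  assume "reach (Yk k) (lower_branch k) (x1, - Pk k x1) (x2, - Pk k x2)"
  then obtain T \<eta> where "T \<ge> 0" "\<eta> 0 = (x1, - Pk k x1)" "\<eta> T = (x2, - Pk k x2)" "sol_in (Yk k) (lower_branch k) \<eta> 0 T"
    unfolding reach_def by blast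
  then show "x2 \<le> x1" using fst_of_sol_in[of "Yk k" _ \<eta> 0 T "-1"] by (simp add: Yk_def split_beta)
next
  assume le: "x2 \<le> x1"
  have "sol_in (Yk k) (lower_branch k) (\<lambda>t. (x1 - t, - Pk k (x1 - t))) 0 (x1 - x2)"
    unfolding sol_in_def
  proof (intro conjI ballI)
    fix t assume t: "t \<in> {0..x1 - x2}"
    show "(x1 - t, - Pk k (x1 - t)) \<in> lower_branch k"
      using t assms by (auto simp: lower_branch_def model_ivl_def)
    have "((\<lambda>t. Pk k (x1 - t)) has_real_derivative deriv (Pk k) (x1 - t) * (- 1)) (at t within {0..x1 - x2})"
      by (rule DERIV_chain2[OF Pk_has_derivative]) (auto intro!: derivative_eq_intros)
    then show "((\<lambda>t. (x1 - t, - Pk k (x1 - t))) has_vector_derivative Yk k (x1 - t, - Pk k (x1 - t)))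
        (at t within {0..x1 - x2})"
      by (auto intro!: derivative_eq_intros simp: Yk_def has_real_derivative_iff_has_vector_derivative[symmetric])
  qed (use le in auto)
  then show "reach (Yk k) (lower_branch k) (x1, - Pk k x1) (x2, - Pk k x2)"
    unfolding reach_def using le by (intro exI[of _ "x1 - x2"]) (auto intro!: exI[of _ "\<lambda>t. (x1 - t, - Pk k (x1 - t))"])
qed

subsection \<open>Combinatorics of a homoclinic loop\<close>

locale homoclinic_loop_times =
  fixes X Y :: "pt \<Rightarrow> pt" and f :: "pt \<Rightarrow> real" and \<gamma> :: "real \<Rightarrow> pt" and T :: real
    and \<tau> :: "nat \<Rightarrow> real" and n :: nat and p :: "nat \<Rightarrow> pt"
  assumes smooth_X: "smooth X" and smooth_Y: "smooth Y" and smooth_f: "smooth f"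
    and two_le_n: "2 \<le> n" and traj: "global_traj X Y f \<gamma>"
    and T_pos: "0 < T" and periodic: "\<And>t. \<gamma> (t + T) = \<gamma> t"
    and \<tau>_step: "\<And>j. j \<le> 2*n+1 \<Longrightarrow> \<tau> j < \<tau> (Suc j)" and \<tau>_period: "\<tau> (2*n+2) = \<tau> 0 + T"
    and Sig_at_\<tau>: "\<And>j. j \<le> 2*n+1 \<Longrightarrow> \<gamma> (\<tau> j) \<in> Sig f"
    and off_Sig: "\<And>j s. j \<le> 2*n+1 \<Longrightarrow> \<tau> j < s \<Longrightarrow> s < \<tau> (Suc j) \<Longrightarrow> \<gamma> s \<notin> Sig f"
    and crossing_first: "crossing X Y f (\<gamma> (\<tau> 0))" and crossing_middle: "crossing X Y f (\<gamma> (\<tau> (n+1)))"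
    and fold_visits: "\<And>i. i \<in> {1..n} \<Longrightarrow> \<gamma> (\<tau> i) = p i \<and> \<gamma> (\<tau> (n+1+i)) = p (n+1-i)"
    and inj_p: "inj_on p {1..n}" and two_folds: "\<And>i. i \<in> {1..n} \<Longrightarrow> vv_twofold X Y f (p i)"
begin

abbreviation visit :: "nat \<Rightarrow> pt" where "visit j \<equiv> \<gamma> (\<tau> j)"

definition arc_above :: "nat \<Rightarrow> bool" where
  "arc_above j \<longleftrightarrow> 0 < f (\<gamma> ((\<tau> j + \<tau> (Suc j)) / 2))"

text \<open>The loop visits \<open>\<gamma> (\<tau> 0), p 1, \<dots>, p n, \<gamma> (\<tau> (n+1)), p n, \<dots>, p 1\<close>: the \<open>j\<close>-th visited
  point is the \<open>visit_index j\<close>-th of \<open>\<gamma> (\<tau> 0), p 1, \<dots>, p n, \<gamma> (\<tau> (n+1))\<close>.\<close>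

definition visit_index :: "nat \<Rightarrow> nat" where
  "visit_index j = (if j \<le> n + 1 then j else if j = 2 * n + 2 then 0 else 2 * n + 2 - j)"

lemma \<tau>_strict_mono_on: "strict_mono_on {..2*n+2} \<tau>"
  by (rule strict_mono_on_atMost_Suc) (use \<tau>_step in auto)

lemma \<tau>_less_iff: "j \<le> 2*n+2 \<Longrightarrow> l \<le> 2*n+2 \<Longrightarrow> \<tau> j < \<tau> l \<longleftrightarrow> j < l"
  using strict_mono_on_less[OF \<tau>_strict_mono_on] by simp

lemma \<tau>_le_iff: "j \<le> 2*n+2 \<Longrightarrow> l \<le> 2*n+2 \<Longrightarrow> \<tau> j \<le> \<tau> l \<longleftrightarrow> j \<le> l"
  using strict_mono_on_less_eq[OF \<tau>_strict_mono_on] by simp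

lemma visit_period: "visit (2*n+2) = visit 0"
  using periodic \<tau>_period by simp

lemma visit_Sig: "j \<le> 2*n+2 \<Longrightarrow> visit j \<in> Sig f"
  using Sig_at_\<tau> visit_period by (cases "j = 2*n+2") auto

lemma arc_sign:
  assumes "j \<le> 2*n+1" "\<tau> j < s" "s < \<tau> (Suc j)"
  shows "arc_above j \<Longrightarrow> 0 < f (\<gamma> s)" and "\<not> arc_above j \<Longrightarrow> f (\<gamma> s) < 0"
proof -
  define m where "m = (\<tau> j + \<tau> (Suc j)) / 2"
  have cont: "continuous_on {\<tau> j..\<tau> (Suc j)} (\<lambda>s. f (\<gamma> s))"
    by (rule continuous_on_compose2[OF smooth_continuous_on[OF smooth_f] global_traj_continuous_on[OF traj]]) auto
  have no_zero: "f (\<gamma> s) \<noteq> 0" if "\<tau> j < s" "s < \<tau> (Suc j)" for s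
    using off_Sig[OF assms(1) that] by (simp add: Sig_def)
  have m: "m \<in> {\<tau> j<..<\<tau> (Suc j)}" using \<tau>_step[OF assms(1)] by (auto simp: m_def)
  have s: "s \<in> {\<tau> j<..<\<tau> (Suc j)}" using assms by auto
  show "arc_above j \<Longrightarrow> 0 < f (\<gamma> s)"
    using pos_of_no_zero_between[OF cont no_zero m s] by (simp add: arc_above_def m_def)
  assume "\<not> arc_above j"
  then have "\<not> 0 < f (\<gamma> m)" by (simp add: arc_above_def m_def)
  moreover have "f (\<gamma> m) \<noteq> 0" using no_zero m by simp
  ultimately have "0 < - f (\<gamma> m)" by simp
  from pos_of_no_zero_between[OF continuous_on_minus[OF cont] _ m s this]
  show "f (\<gamma> s) < 0" using no_zero by simp
qed

lemma arc_sol_in: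
  assumes "j \<le> 2*n+1"
  shows "sol_in (if arc_above j then X else Y) (if arc_above j then Splus f else Sminus f) \<gamma> (\<tau> j) (\<tau> (Suc j))"
proof (cases "arc_above j")
  case True
  have "sol_in X (Splus f) \<gamma> (\<tau> j) (\<tau> (Suc j))"
    by (rule global_traj_arc_Splus[OF traj \<tau>_step[OF assms]]) (use arc_sign(1)[OF assms] True visit_Sig assms in auto)
  then show ?thesis using True by simp
next
  case False
  have "sol_in Y (Sminus f) \<gamma> (\<tau> j) (\<tau> (Suc j))"
    by (rule global_traj_arc_Sminus[OF traj \<tau>_step[OF assms]]) (use arc_sign(2)[OF assms] False visit_Sig assms in auto)
  then show ?thesis using False by simp
qed

lemma same_side_arcs_common_end:
  assumes "j1 \<le> 2*n+1" "j2 \<le> 2*n+1" "arc_above j1 = arc_above j2" "visit (Suc j1) = visit (Suc j2)"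
  shows "visit j1 = visit j2"
proof -
  have arc2: "sol_in (if arc_above j1 then X else Y) (if arc_above j2 then Splus f else Sminus f) \<gamma> (\<tau> j2) (\<tau> (Suc j2))"
    using arc_sol_in[OF assms(2)] assms(3) by simp
  have "smooth (if arc_above j1 then X else Y)" using smooth_X smooth_Y by simp
  then show ?thesis
    by (rule arcs_common_end_imp_common_start[OF _ arc_sol_in[OF assms(1)] arc2, where E = "Sig f"])
      (use \<tau>_step visit_Sig off_Sig assms in auto)
qed

lemma same_side_arcs_common_start:
  assumes "j1 \<le> 2*n+1" "j2 \<le> 2*n+1" "arc_above j1 = arc_above j2" "visit j1 = visit j2"
  shows "visit (Suc j1) = visit (Suc j2)"
proof -
  have arc2: "sol_in (if arc_above j1 then X else Y) (if arc_above j2 then Splus f else Sminus f) \<gamma> (\<tau> j2) (\<tau> (Suc j2))"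
    using arc_sol_in[OF assms(2)] assms(3) by simp
  have "smooth (if arc_above j1 then X else Y)" using smooth_X smooth_Y by simp
  then show ?thesis
    by (rule arcs_common_start_imp_common_end[OF _ arc_sol_in[OF assms(1)] arc2, where E = "Sig f"])
      (use \<tau>_step visit_Sig off_Sig assms in auto)
qed

lemma visit_visit_index:
  assumes "j \<le> 2*n+2"
  shows "visit j = visit (visit_index j)"
proof -
  consider "j \<le> n+1" | "j = 2*n+2" | "n+2 \<le> j" "j \<le> 2*n+1" using assms by linarith
  then show ?thesis
  proof cases
    case 3
    define i where "i = j - (n+1)"
    have "i \<in> {1..n}" "n+1-i \<in> {1..n}" "j = n+1+i" "visit_index j = n+1-i" "n+1-(n+1-i) = i"
      using 3 by (auto simp: i_def visit_index_def)
    then show ?thesis using fold_visits[of i] fold_visits[of "n+1-i"] by metis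
  qed (use visit_period in \<open>auto simp: visit_index_def\<close>)
qed

lemma visit_index_le: "visit_index j \<le> n+1"
  by (simp add: visit_index_def; arith)

lemma Lie_at_visit:
  shows "Lie X f (visit 0) \<noteq> 0" "Lie Y f (visit 0) \<noteq> 0"
    and "Lie X f (visit (n+1)) \<noteq> 0" "Lie Y f (visit (n+1)) \<noteq> 0"
    and "i \<in> {1..n} \<Longrightarrow> Lie X f (visit i) = 0 \<and> Lie Y f (visit i) = 0"
  using crossing_first crossing_middle two_folds fold_visits unfolding crossing_def vv_twofold_def by auto

text \<open>Two-folds are distinct and differ from the sewing points, which are not tangencies.\<close>

lemma visit_eq_first_half:
  assumes "i \<le> n+1" "l \<le> n+1" "visit i = visit l"
  shows "i = l \<or> {i, l} = {0, n+1}"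
proof -
  have tangency: False if "i \<in> {1..n}" "l = 0 \<or> l = n+1" "visit i = visit l" for i l
    using Lie_at_visit(1,3) Lie_at_visit(5)[OF that(1)] that(2,3) by auto
  show ?thesis
  proof (cases "i \<in> {1..n}")
    case True
    then have "l \<in> {1..n}" using tangency[of i l] assms by fastforce
    then show ?thesis using inj_onD[OF inj_p] fold_visits True assms(3) by metis
  next
    case False
    then have "l \<notin> {1..n}" using tangency[of l i] assms by fastforce
    then show ?thesis using False assms by auto
  qed
qed

lemma visit_index_eq_if_visit_eq:
  assumes "j \<le> 2*n+2" "l \<le> 2*n+2" "visit j = visit l"
  shows "visit_index j = visit_index l \<or> {visit_index j, visit_index l} = {0, n+1}"
  using visit_eq_first_half[OF visit_index_le visit_index_le] visit_visit_index assms by metis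

lemma fold_visit_mirror:
  assumes "i \<in> {1..n}"
  shows "visit (2*n+2-i) = visit i"
proof -
  have "n+1-i \<in> {1..n}" "n+1+(n+1-i) = 2*n+2-i" "n+1-(n+1-i) = i" using assms by auto
  then show ?thesis using fold_visits[of i] fold_visits[of "n+1-i"] assms by metis
qed

text \<open>The two arcs arriving at (leaving) a two-fold lie on opposite sides of \<open>\<Sigma>\<close>: otherwise they
  follow the same field and would also start (end) at the same point, which the visiting order forbids.\<close>

lemma arcs_into_fold_differ:
  assumes "i \<in> {1..n}"
  shows "arc_above (i - 1) \<noteq> arc_above (2*n+1-i)"
proof
  assume same: "arc_above (i - 1) = arc_above (2*n+1-i)"
  have "visit (Suc (i - 1)) = visit (Suc (2*n+1-i))"
    using fold_visit_mirror[OF assms] assms by (simp add: Suc_diff_le)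
  then have "visit (i - 1) = visit (2*n+1-i)"
    by (rule same_side_arcs_common_end[rotated 2, OF same]) (use assms in auto)
  then have "visit_index (i - 1) = visit_index (2*n+1-i) \<or> {visit_index (i - 1), visit_index (2*n+1-i)} = {0, n+1}"
    by (rule visit_index_eq_if_visit_eq[rotated 2]) (use assms in auto)
  moreover have "visit_index (i - 1) = i - 1" "visit_index (2*n+1-i) = i + 1"
    using assms by (auto simp: visit_index_def)
  ultimately show False using assms two_le_n by (auto simp: doubleton_eq_iff)
qed

lemma arcs_out_of_fold_differ:
  assumes "i \<in> {1..n}"
  shows "arc_above i \<noteq> arc_above (2*n+2-i)"
proof
  assume same: "arc_above i = arc_above (2*n+2-i)"
  have "visit (Suc i) = visit (Suc (2*n+2-i))"
    by (rule same_side_arcs_common_start[OF _ _ same]) (use assms fold_visit_mirror[OF assms] in auto)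
  then have "visit_index (Suc i) = visit_index (Suc (2*n+2-i))
      \<or> {visit_index (Suc i), visit_index (Suc (2*n+2-i))} = {0, n+1}"
    by (rule visit_index_eq_if_visit_eq[rotated 2]) (use assms in auto)
  moreover have "visit_index (Suc i) = i + 1" "visit_index (Suc (2*n+2-i)) = i - 1"
    using assms by (auto simp: visit_index_def)
  ultimately show False using assms two_le_n by (auto simp: doubleton_eq_iff)
qed

text \<open>At the sewing point \<open>\<gamma> (\<tau> 0)\<close> both adjacent arcs would otherwise follow one field \<open>V\<close>
  with \<open>V f\<close> both \<open>\<le> 0\<close> (arriving) and \<open>\<ge> 0\<close> (leaving), i.e. a tangency.\<close>

lemma arcs_at_crossing_differ: "arc_above (2*n+1) \<noteq> arc_above 0"
proof
  assume same: "arc_above (2*n+1) = arc_above 0"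
  have steps: "\<tau> 0 < \<tau> 1" "\<tau> (2*n+1) < \<tau> (2*n+2)" using \<tau>_step[of 0] \<tau>_step[of "2*n+1"] by auto
  have arcs: "sol_in (if arc_above 0 then X else Y) (if arc_above 0 then Splus f else Sminus f) \<gamma> (\<tau> 0) (\<tau> 1)"
    "sol_in (if arc_above 0 then X else Y) (if arc_above 0 then Splus f else Sminus f) \<gamma> (\<tau> (2*n+1)) (\<tau> (2*n+2))"
    using arc_sol_in[of 0] arc_sol_in[of "2*n+1"] same by auto
  have ends: "visit 0 \<in> Sig f" "visit (2*n+2) \<in> Sig f" using visit_Sig by auto
  show False
  proof (cases "arc_above 0")
    case True
    then have "sol_in X (Splus f) \<gamma> (\<tau> 0) (\<tau> 1)" "sol_in X (Splus f) \<gamma> (\<tau> (2*n+1)) (\<tau> (2*n+2))"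
      using arcs by auto
    then have "0 \<le> Lie X f (visit 0)" "Lie X f (visit (2*n+2)) \<le> 0"
      using Lie_nonneg_at_start_Splus[OF smooth_f, of X \<gamma> "\<tau> 0" "\<tau> 1"]
        Lie_nonpos_at_end_Splus[OF smooth_f, of X \<gamma> "\<tau> (2*n+1)" "\<tau> (2*n+2)"] steps ends by auto
    then show False using Lie_at_visit(1) visit_period by simp
  next
    case False
    then have "sol_in Y (Sminus f) \<gamma> (\<tau> 0) (\<tau> 1)" "sol_in Y (Sminus f) \<gamma> (\<tau> (2*n+1)) (\<tau> (2*n+2))"
      using arcs by auto
    then have "Lie Y f (visit 0) \<le> 0" "0 \<le> Lie Y f (visit (2*n+2))"
      using Lie_nonpos_at_start_Sminus[OF smooth_f, of Y \<gamma> "\<tau> 0" "\<tau> 1"]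
        Lie_nonneg_at_end_Sminus[OF smooth_f, of Y \<gamma> "\<tau> (2*n+1)" "\<tau> (2*n+2)"] steps ends by auto
    then show False using Lie_at_visit(2) visit_period by simp
  qed
qed

lemma arc_above_iff:
  assumes "j \<le> 2*n+1"
  shows "arc_above j \<longleftrightarrow> (arc_above 0 \<longleftrightarrow> j \<le> n)"
proof -
  have pattern: "arc_above i = arc_above 0 \<and> arc_above (2*n+1-i) \<noteq> arc_above 0" if "i \<le> n" for i
    using that
  proof (induction i)
    case 0 then show ?case using arcs_at_crossing_differ by auto
  next
    case (Suc i)
    then have IH: "arc_above i = arc_above 0" "arc_above (2*n+1-i) \<noteq> arc_above 0" by auto
    have "Suc i \<in> {1..n}" "2*n+2 - Suc i = 2*n+1-i" "Suc i - 1 = i" using Suc.prems by auto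
    then have "arc_above (Suc i) \<noteq> arc_above (2*n+1-i)" "arc_above i \<noteq> arc_above (2*n+1-Suc i)"
      using arcs_out_of_fold_differ[of "Suc i"] arcs_into_fold_differ[of "Suc i"] by metis+
    then show ?case using IH by blast
  qed
  show ?thesis
  proof (cases "j \<le> n")
    case True then show ?thesis using pattern[OF True] by simp
  next
    case False
    then have "2*n+1-j \<le> n" "2*n+1-(2*n+1-j) = j" using assms by auto
    then show ?thesis using pattern[of "2*n+1-j"] False by metis
  qed
qed


lemma loop_time_cases:
  assumes "t \<in> {\<tau> 0..\<tau> (2*n+2)}"
  obtains (visit) j where "j \<le> 2*n+2" "t = \<tau> j"
    | (arc) j where "j \<le> 2*n+1" "\<tau> j < t" "t < \<tau> (Suc j)"
proof -
  have "\<And>j. j < 2*n+2 \<Longrightarrow> \<tau> j < \<tau> (Suc j)" using \<tau>_step by simp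
  then obtain j where "j \<le> 2*n+2" "t = \<tau> j \<or> (j < 2*n+2 \<and> \<tau> j < t \<and> t < \<tau> (Suc j))"
    using strict_mono_on_cover[of "2*n+2" \<tau> t] assms by auto
  then show ?thesis
  proof (elim disjE conjE)
    assume "j < 2*n+2" "\<tau> j < t" "t < \<tau> (Suc j)"
    then show ?thesis using arc[of j] by simp
  qed (rule visit)
qed

lemma Sig_time:
  assumes "t \<in> {\<tau> 0..\<tau> (2*n+2)}" "\<gamma> t \<in> Sig f"
  obtains j where "j \<le> 2*n+2" "t = \<tau> j"
  using assms(1)
proof (cases rule: loop_time_cases)
  case (arc j) then show ?thesis using off_Sig assms(2) by blast
qed

lemma periodic_int: "\<gamma> (t + of_int m * T) = \<gamma> t"
proof -
  have nat: "\<gamma> (t + real k * T) = \<gamma> t" for t k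
  proof (induction k arbitrary: t)
    case (Suc k)
    have "\<gamma> (t + real (Suc k) * T) = \<gamma> ((t + real k * T) + T)" by (simp add: algebra_simps)
    then show ?case using periodic Suc.IH by simp
  qed simp
  show ?thesis
  proof (cases "0 \<le> m")
    case True then show ?thesis using nat[of t "nat m"] by simp
  next
    case False then show ?thesis using nat[of "t + of_int m * T" "nat (- m)"] by simp
  qed
qed

lemma range_eq: "range \<gamma> = \<gamma> ` {\<tau> 0..\<tau> (2*n+2)}"
proof
  show "range \<gamma> \<subseteq> \<gamma> ` {\<tau> 0..\<tau> (2*n+2)}"
  proof
    fix z assume "z \<in> range \<gamma>"
    then obtain t where z: "z = \<gamma> t" by auto
    define m where "m = \<lfloor>(t - \<tau> 0) / T\<rfloor>"
    have "of_int m \<le> (t - \<tau> 0) / T" "(t - \<tau> 0) / T < of_int m + 1"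
      unfolding m_def by linarith+
    then have "\<tau> 0 \<le> t - of_int m * T" "t - of_int m * T \<le> \<tau> 0 + T"
      using T_pos by (auto simp: field_simps)
    moreover have "\<gamma> (t - of_int m * T) = z" using periodic_int[of "t - of_int m * T" m] z by simp
    ultimately show "z \<in> \<gamma> ` {\<tau> 0..\<tau> (2*n+2)}" using \<tau>_period by (auto intro: image_eqI[of _ _ "t - of_int m * T"])
  qed
qed auto

lemma range_Sig: "range \<gamma> \<inter> Sig f = visit ` {..n+1}"
proof
  show "visit ` {..n+1} \<subseteq> range \<gamma> \<inter> Sig f" using visit_Sig by auto
  show "range \<gamma> \<inter> Sig f \<subseteq> visit ` {..n+1}"
  proof
    fix z assume "z \<in> range \<gamma> \<inter> Sig f"
    then obtain t where t: "t \<in> {\<tau> 0..\<tau> (2*n+2)}" "z = \<gamma> t" "\<gamma> t \<in> Sig f"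
      using range_eq by auto
    obtain j where "j \<le> 2*n+2" "t = \<tau> j" by (rule Sig_time[OF t(1) t(3)])
    then have "z = visit (visit_index j)" using visit_visit_index t(2) by simp
    then show "z \<in> visit ` {..n+1}" using visit_index_le by blast
  qed
qed

lemma range_slide_esc: "range \<gamma> \<inter> slide_esc X Y f = {}"
proof -
  have "0 \<le> Lie X f (visit j) * Lie Y f (visit j)" if "j \<le> n+1" for j
  proof (cases "j \<in> {1..n}")
    case True then show ?thesis using Lie_at_visit(5) by simp
  next
    case False
    then have "j = 0 \<or> j = n+1" using that by auto
    then show ?thesis using crossing_first crossing_middle by (auto simp: crossing_def)
  qed
  then have "visit ` {..n+1} \<inter> slide_esc X Y f = {}"
    unfolding slide_esc_def using mult_neg_pos mult_pos_neg by (fastforce simp: not_less[symmetric])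
  then show ?thesis using range_Sig unfolding slide_esc_def by blast
qed

text \<open>Starting the period at the second sewing point exchanges the two halves of the loop.\<close>

definition shifted_\<tau> :: "nat \<Rightarrow> real" where
  "shifted_\<tau> j = (if j \<le> n+1 then \<tau> (j + n + 1) else \<tau> (j - n - 1) + T)"

lemma shifted_\<tau>_cases:
  assumes "j \<le> 2*n+1"
  obtains "j \<le> n" "shifted_\<tau> j = \<tau> (j + n + 1)" "shifted_\<tau> (Suc j) = \<tau> (Suc (j + n + 1))"
    | "j = n+1" "shifted_\<tau> j = \<tau> 0 + T" "shifted_\<tau> (Suc j) = \<tau> (Suc 0) + T"
    | "n + 2 \<le> j" "j - n - 1 \<le> 2*n+1" "shifted_\<tau> j = \<tau> (j - n - 1) + T"
      "shifted_\<tau> (Suc j) = \<tau> (Suc (j - n - 1)) + T"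
proof -
  have last: "\<tau> (n + 1 + n + 1) = \<tau> 0 + T" using \<tau>_period by (simp add: mult_2 add.assoc)
  consider "j \<le> n" | "j = n+1" | "n+2 \<le> j" using assms by linarith
  then show ?thesis
  proof cases
    case 3
    then have "Suc j - n - 1 = Suc (j - n - 1)" "\<not> j \<le> n+1" "\<not> Suc j \<le> n+1" by auto
    then show ?thesis using that(3) 3 assms by (simp add: shifted_\<tau>_def)
  qed (use that last in \<open>auto simp: shifted_\<tau>_def\<close>)
qed

lemma shifted_\<tau>_step: "j \<le> 2*n+1 \<Longrightarrow> shifted_\<tau> j < shifted_\<tau> (Suc j)"
  by (erule shifted_\<tau>_cases) (use \<tau>_step[of "j + n + 1"] \<tau>_step[of 0] \<tau>_step[of "j - n - 1"] in auto)

lemma shifted_off_Sig: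
  assumes "j \<le> 2*n+1" "shifted_\<tau> j < s" "s < shifted_\<tau> (Suc j)"
  shows "\<gamma> s \<notin> Sig f"
proof -
  have "\<gamma> (s - T) = \<gamma> s" using periodic[of "s - T"] by simp
  then show ?thesis
    using assms off_Sig[of "j + n + 1" s] off_Sig[of 0 "s - T"] off_Sig[of "j - n - 1" "s - T"]
    by (cases rule: shifted_\<tau>_cases[OF assms(1)]) auto
qed

lemma shifted_loop_times: "homoclinic_loop_times X Y f \<gamma> T shifted_\<tau> n (\<lambda>i. p (n + 1 - i))"
proof
  fix j assume "j \<le> 2*n+1"
  then show "\<gamma> (shifted_\<tau> j) \<in> Sig f"
    using visit_Sig[of "j + n + 1"] visit_Sig[of "j - n - 1"] periodic by (auto simp: shifted_\<tau>_def)
next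
  fix i :: nat assume i: "i \<in> {1..n}"
  then have i': "n + 1 - i \<in> {1..n}" "n + 1 - (n + 1 - i) = i" by auto
  have "i + n + 1 = n + 1 + i" by simp
  then have "\<gamma> (shifted_\<tau> i) = p (n + 1 - i)" using fold_visits[OF i] i by (simp only: shifted_\<tau>_def) simp
  moreover have "\<gamma> (shifted_\<tau> (n+1+i)) = p i" using fold_visits[OF i] periodic i by (simp add: shifted_\<tau>_def)
  ultimately show "\<gamma> (shifted_\<tau> i) = p (n + 1 - i) \<and> \<gamma> (shifted_\<tau> (n+1+i)) = p (n + 1 - (n + 1 - i))"
    using i'(2) by simp
  show "vv_twofold X Y f (p (n + 1 - i))" using two_folds[OF i'(1)] .
next
  show "inj_on (\<lambda>i. p (n + 1 - i)) {1..n}"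
  proof (rule inj_onI)
    fix i l assume il: "i \<in> {1..n}" "l \<in> {1..n}" "p (n + 1 - i) = p (n + 1 - l)"
    then have "n + 1 - i = n + 1 - l" by (intro inj_onD[OF inj_p]) auto
    then show "i = l" using il by auto
  qed
  show "crossing X Y f (\<gamma> (shifted_\<tau> 0))" using crossing_middle by (simp add: shifted_\<tau>_def add.commute)
  show "crossing X Y f (\<gamma> (shifted_\<tau> (n+1)))" using crossing_first visit_period by (simp add: shifted_\<tau>_def mult_2)
  show "shifted_\<tau> (2*n+2) = shifted_\<tau> 0 + T" by (simp add: shifted_\<tau>_def)
qed (use smooth_X smooth_Y smooth_f two_le_n traj T_pos periodic shifted_\<tau>_step shifted_off_Sig in auto)

lemma shifted_arc_above: "homoclinic_loop_times.arc_above f \<gamma> shifted_\<tau> 0 = arc_above (n+1)"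
  using homoclinic_loop_times.arc_above_def[OF shifted_loop_times]
  by (simp add: arc_above_def shifted_\<tau>_def add.commute)

end

locale upper_first_loop = homoclinic_loop_times +
  assumes first_arc_above: "arc_above 0"

lemma (in homoclinic_loop_times) obtain_upper_first_loop:
  obtains \<tau>' p' where "upper_first_loop X Y f \<gamma> T \<tau>' n p'"
proof (cases "arc_above 0")
  case True
  then show ?thesis
    using that upper_first_loop.intro[OF homoclinic_loop_times_axioms] by (simp add: upper_first_loop_axioms_def)
next
  case False
  then have "arc_above (n+1)" using arc_above_iff[of "n+1"] by simp
  then show ?thesis
    using that upper_first_loop.intro[OF shifted_loop_times]
    by (simp add: upper_first_loop_axioms_def shifted_arc_above)
qed

context upper_first_loop
begin

lemma arc_above_iff_first_half: "j \<le> 2*n+1 \<Longrightarrow> arc_above j \<longleftrightarrow> j \<le> n"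
  using arc_above_iff first_arc_above by simp

lemma arc_X: "j \<le> n \<Longrightarrow> sol_in X (Splus f) \<gamma> (\<tau> j) (\<tau> (Suc j))"
  using arc_sol_in[of j] arc_above_iff_first_half[of j] by simp

lemma arc_Y: "n < j \<Longrightarrow> j \<le> 2*n+1 \<Longrightarrow> sol_in Y (Sminus f) \<gamma> (\<tau> j) (\<tau> (Suc j))"
  using arc_sol_in[of j] arc_above_iff_first_half[of j] by simp

lemma upper_half_sol_in: "sol_in X (Splus f) \<gamma> (\<tau> 0) (\<tau> (n+1))"
  by (rule sol_in_join_chain) (use arc_X in auto)

lemma lower_half_sol_in: "sol_in Y (Sminus f) \<gamma> (\<tau> (n+1)) (\<tau> (2*n+2))"
  by (rule sol_in_join_chain) (use arc_Y in auto)

lemma Lie_X_middle_neg: "Lie X f (visit (n+1)) < 0"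
proof -
  have "Lie X f (visit (Suc n)) \<le> 0"
    using Lie_nonpos_at_end_Splus[OF smooth_f arc_X[of n] \<tau>_step[of n] visit_Sig[of "Suc n"]] by simp
  then show ?thesis using Lie_at_visit(3) by simp
qed

lemma Lie_X_first_nonneg: "0 \<le> Lie X f (visit 0)"
  using Lie_nonneg_at_start_Splus[OF smooth_f arc_X[of 0] \<tau>_step[of 0] visit_Sig[of 0]] by simp

lemma Lie_Y_first_pos: "0 < Lie Y f (visit 0)"
proof -
  have "0 \<le> Lie Y f (visit (Suc (2*n+1)))"
    using Lie_nonneg_at_end_Sminus[OF smooth_f arc_Y[of "2*n+1"] \<tau>_step[of "2*n+1"] visit_Sig[of "Suc (2*n+1)"]]
    by simp
  then show ?thesis using Lie_at_visit(2) visit_period by simp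
qed

lemma visit_inj: "i \<le> n+1 \<Longrightarrow> l \<le> n+1 \<Longrightarrow> visit i = visit l \<Longrightarrow> i = l"
  using visit_eq_first_half[of i l] Lie_X_middle_neg Lie_X_first_nonneg by (auto simp: doubleton_eq_iff)

lemma visit_mirror: "j \<le> n+1 \<Longrightarrow> visit (2*n+2-j) = visit j"
  using fold_visit_mirror[of j] visit_period by (cases "j = 0 \<or> j = n+1") (auto simp: mult_2)

lemma range_Splus: "range \<gamma> \<inter> Splus f = \<gamma> ` {\<tau> 0..\<tau> (n+1)}"
proof
  show "\<gamma> ` {\<tau> 0..\<tau> (n+1)} \<subseteq> range \<gamma> \<inter> Splus f" using upper_half_sol_in by (auto simp: sol_in_def)
  show "range \<gamma> \<inter> Splus f \<subseteq> \<gamma> ` {\<tau> 0..\<tau> (n+1)}"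
  proof
    fix z assume "z \<in> range \<gamma> \<inter> Splus f"
    then obtain t where t: "t \<in> {\<tau> 0..\<tau> (2*n+2)}" "z = \<gamma> t" "0 \<le> f (\<gamma> t)"
      using range_eq by (auto simp: Splus_def)
    from t(1) show "z \<in> \<gamma> ` {\<tau> 0..\<tau> (n+1)}"
    proof (cases rule: loop_time_cases)
      case (visit j)
      then have "z = visit (visit_index j)" using visit_visit_index t(2) by simp
      moreover have "\<tau> (visit_index j) \<in> {\<tau> 0..\<tau> (n+1)}" using visit_index_le[of j] \<tau>_le_iff by auto
      ultimately show ?thesis by blast
    next
      case (arc j)
      then have "j \<le> n" using arc_sign(2)[of j t] arc_above_iff_first_half[of j] t(3) by fastforce
      then have "t \<in> {\<tau> 0..\<tau> (n+1)}" using arc \<tau>_le_iff[of "Suc j" "n+1"] \<tau>_le_iff[of 0 j] by auto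
      then show ?thesis using t(2) by blast
    qed
  qed
qed

lemma range_Sminus: "range \<gamma> \<inter> Sminus f = \<gamma> ` {\<tau> (n+1)..\<tau> (2*n+2)}"
proof
  show "\<gamma> ` {\<tau> (n+1)..\<tau> (2*n+2)} \<subseteq> range \<gamma> \<inter> Sminus f" using lower_half_sol_in by (auto simp: sol_in_def)
  show "range \<gamma> \<inter> Sminus f \<subseteq> \<gamma> ` {\<tau> (n+1)..\<tau> (2*n+2)}"
  proof
    fix z assume "z \<in> range \<gamma> \<inter> Sminus f"
    then obtain t where t: "t \<in> {\<tau> 0..\<tau> (2*n+2)}" "z = \<gamma> t" "f (\<gamma> t) \<le> 0"
      using range_eq by (auto simp: Sminus_def)
    from t(1) show "z \<in> \<gamma> ` {\<tau> (n+1)..\<tau> (2*n+2)}"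
    proof (cases rule: loop_time_cases)
      case (visit j)
      then have "z = visit (visit_index j)" using visit_visit_index t(2) by simp
      also have "\<dots> = visit (2*n+2 - visit_index j)" using visit_mirror[OF visit_index_le] by simp
      finally have "z = visit (2*n+2 - visit_index j)" .
      moreover have "\<tau> (2*n+2 - visit_index j) \<in> {\<tau> (n+1)..\<tau> (2*n+2)}"
        using visit_index_le[of j] \<tau>_le_iff by auto
      ultimately show ?thesis by blast
    next
      case (arc j)
      then have "n < j" using arc_sign(1)[of j t] arc_above_iff_first_half[of j] t(3) by fastforce
      then have "t \<in> {\<tau> (n+1)..\<tau> (2*n+2)}" using arc \<tau>_le_iff[of "n+1" j] \<tau>_le_iff[of "Suc j" "2*n+2"] by auto
      then show ?thesis using t(2) by blast
    qed
  qed
qed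

lemma upper_half_inj: "inj_on \<gamma> {\<tau> 0..\<tau> (n+1)}"
proof (rule sol_in_inj_on[OF smooth_X upper_half_sol_in, where Z = "\<tau> ` {..n+1}" and E = "Sig f"])
  show "\<tau> ` {..n+1} \<subseteq> {\<tau> 0..\<tau> (n+1)}" using \<tau>_le_iff by auto
  show "s \<in> \<tau> ` {..n+1}" if s: "s \<in> {\<tau> 0..\<tau> (n+1)}" "\<gamma> s \<in> Sig f" for s
  proof -
    have "s \<in> {\<tau> 0..\<tau> (2*n+2)}" using s \<tau>_le_iff[of 0 "n+1"] \<tau>_le_iff[of "n+1" "2*n+2"] by auto
    then obtain j where "j \<le> 2*n+2" "s = \<tau> j" using s(2) by (rule Sig_time)
    then show ?thesis using s \<tau>_le_iff[of j "n+1"] \<tau>_le_iff[of "0" j] by auto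
  qed
  show "inj_on \<gamma> (\<tau> ` {..n+1})"
  proof (rule inj_onI)
    fix s t assume "s \<in> \<tau> ` {..n+1}" "t \<in> \<tau> ` {..n+1}" "\<gamma> s = \<gamma> t"
    then obtain i l where "i \<le> n+1" "l \<le> n+1" "s = \<tau> i" "t = \<tau> l" "visit i = visit l" by auto
    then show "s = t" using visit_inj by blast
  qed
qed (use visit_Sig in auto)

lemma lower_half_inj: "inj_on \<gamma> {\<tau> (n+1)..\<tau> (2*n+2)}"
proof (rule sol_in_inj_on[OF smooth_Y lower_half_sol_in, where Z = "\<tau> ` {n+1..2*n+2}" and E = "Sig f"])
  show "\<tau> ` {n+1..2*n+2} \<subseteq> {\<tau> (n+1)..\<tau> (2*n+2)}" using \<tau>_le_iff by auto
  show "s \<in> \<tau> ` {n+1..2*n+2}" if s: "s \<in> {\<tau> (n+1)..\<tau> (2*n+2)}" "\<gamma> s \<in> Sig f" for s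
  proof -
    have "s \<in> {\<tau> 0..\<tau> (2*n+2)}" using s \<tau>_le_iff[of 0 "n+1"] \<tau>_le_iff[of "n+1" "2*n+2"] by auto
    then obtain j where "j \<le> 2*n+2" "s = \<tau> j" using s(2) by (rule Sig_time)
    then show ?thesis using s \<tau>_le_iff[of j "2*n+2"] \<tau>_le_iff[of "n+1" j] by auto
  qed
  show "inj_on \<gamma> (\<tau> ` {n+1..2*n+2})"
  proof (rule inj_onI)
    fix s t assume "s \<in> \<tau> ` {n+1..2*n+2}" "t \<in> \<tau> ` {n+1..2*n+2}" "\<gamma> s = \<gamma> t"
    then obtain i l where il: "i \<in> {n+1..2*n+2}" "l \<in> {n+1..2*n+2}" "s = \<tau> i" "t = \<tau> l" "visit i = visit l"
      by auto
    then have "visit (2*n+2-i) = visit (2*n+2-l)" using visit_mirror[of "2*n+2-i"] visit_mirror[of "2*n+2-l"] by auto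
    then have "2*n+2-i = 2*n+2-l" by (rule visit_inj[rotated 2]) (use il in auto)
    then have "i = l" using il by auto
    then show "s = t" using il by simp
  qed
qed (use visit_Sig in auto)

lemma reach_upper_half:
  assumes "t1 \<in> {\<tau> 0..\<tau> (n+1)}" "t2 \<in> {\<tau> 0..\<tau> (n+1)}"
  shows "reach X (range \<gamma> \<inter> Splus f) (\<gamma> t1) (\<gamma> t2) \<longleftrightarrow> t1 \<le> t2"
  unfolding range_Splus
proof (rule reach_along_injective_arc[OF smooth_X upper_half_sol_in upper_half_inj _ assms])
  fix \<eta> s0 s1 assume "s0 < s1" "sol_in X (\<gamma> ` {\<tau> 0..\<tau> (n+1)}) \<eta> s0 s1"
  moreover have "\<gamma> ` {\<tau> 0..\<tau> (n+1)} \<subseteq> Splus f" using range_Splus by blast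
  ultimately have "sol_in X (Splus f) \<eta> s0 s1" by (auto simp: sol_in_def)
  then show "\<eta> s0 \<noteq> visit (n+1)"
    using Lie_nonneg_at_start_Splus[OF smooth_f _ \<open>s0 < s1\<close>] Lie_X_middle_neg visit_Sig[of "n+1"] by force
qed

lemma reach_lower_half:
  assumes "t1 \<in> {\<tau> (n+1)..\<tau> (2*n+2)}" "t2 \<in> {\<tau> (n+1)..\<tau> (2*n+2)}"
  shows "reach Y (range \<gamma> \<inter> Sminus f) (\<gamma> t1) (\<gamma> t2) \<longleftrightarrow> t1 \<le> t2"
  unfolding range_Sminus
proof (rule reach_along_injective_arc[OF smooth_Y lower_half_sol_in lower_half_inj _ assms])
  fix \<eta> s0 s1 assume "s0 < s1" "sol_in Y (\<gamma> ` {\<tau> (n+1)..\<tau> (2*n+2)}) \<eta> s0 s1"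
  moreover have "\<gamma> ` {\<tau> (n+1)..\<tau> (2*n+2)} \<subseteq> Sminus f" using range_Sminus by blast
  ultimately have "sol_in Y (Sminus f) \<eta> s0 s1" by (auto simp: sol_in_def)
  then show "\<eta> s0 \<noteq> visit (2*n+2)"
    using Lie_nonpos_at_start_Sminus[OF smooth_f _ \<open>s0 < s1\<close>] Lie_Y_first_pos visit_Sig[of 0] visit_period by force
qed

subsection \<open>The conjugating homeomorphism\<close>

text \<open>The abscissa \<open>x\<close> of a point of \<open>Lk (n+1)\<close> is sent to a time of the loop: increasingly onto
  \<open>[\<tau> 0, \<tau> (n+1)]\<close> on the upper branch and decreasingly onto \<open>[\<tau> (n+1), \<tau> (2n+2)]\<close> on the lower one,
  matching the zeros of \<open>Pk (n+1)\<close> with the \<open>\<Sigma>\<close>-times.\<close>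

definition up_time :: "real \<Rightarrow> real" where
  "up_time = pl_interp (Pk_root (n+1)) \<tau> (n+1)"

definition down_time :: "real \<Rightarrow> real" where
  "down_time x = pl_interp (Pk_root (n+1)) (\<lambda>j. \<tau> (n+1+j)) (n+1) (- x)"

definition loop_map :: "pt \<Rightarrow> pt" where
  "loop_map z = (if 0 \<le> snd z then \<gamma> (up_time (fst z)) else \<gamma> (down_time (fst z)))"

lemma roots_strict_mono_on: "strict_mono_on {..n+1} (Pk_root (n+1))"
  using Pk_root_strict_mono_on two_le_n by simp

lemma model_ivl_roots: "model_ivl (n+1) = {Pk_root (n+1) 0..Pk_root (n+1) (n+1)}"
  by (rule model_ivl_eq) simp

lemma up_time_continuous_on: "continuous_on S up_time"
  unfolding up_time_def by (rule pl_interp_continuous_on[OF roots_strict_mono_on])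

lemma up_time_strict_mono_on: "strict_mono_on (model_ivl (n+1)) up_time"
  unfolding up_time_def model_ivl_roots
  by (rule pl_interp_strict_mono_on[OF roots_strict_mono_on]) (auto intro: monotone_on_subset[OF \<tau>_strict_mono_on])

lemma up_time_root: "j \<le> n+1 \<Longrightarrow> up_time (Pk_root (n+1) j) = \<tau> j"
  unfolding up_time_def by (rule pl_interp_node[OF roots_strict_mono_on])

lemma up_time_image: "up_time ` model_ivl (n+1) = {\<tau> 0..\<tau> (n+1)}"
proof -
  have "Pk_root (n+1) 0 \<le> Pk_root (n+1) (n+1)" using strict_mono_on_leD[OF roots_strict_mono_on, of 0 "n+1"] by simp
  then have "up_time ` model_ivl (n+1) = {up_time (Pk_root (n+1) 0)..up_time (Pk_root (n+1) (n+1))}"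
    unfolding model_ivl_roots
    by (intro continuous_strict_mono_on_image_Icc up_time_continuous_on up_time_strict_mono_on[unfolded model_ivl_roots])
  then show ?thesis using up_time_root[of 0] up_time_root[of "n+1"] by simp
qed

lemma lower_times_strict_mono_on: "strict_mono_on {..n+1} (\<lambda>j. \<tau> (n+1+j))"
  by (rule strict_mono_onI) (simp add: \<tau>_less_iff)

lemma down_time_continuous_on: "continuous_on S down_time"
  unfolding down_time_def
  by (intro continuous_on_compose2[OF pl_interp_continuous_on[OF roots_strict_mono_on]] continuous_intros) auto

lemma down_time_le_iff:
  assumes "x1 \<in> model_ivl (n+1)" "x2 \<in> model_ivl (n+1)"
  shows "down_time x1 \<le> down_time x2 \<longleftrightarrow> x2 \<le> x1"
proof -
  have "strict_mono_on (model_ivl (n+1)) (pl_interp (Pk_root (n+1)) (\<lambda>j. \<tau> (n+1+j)) (n+1))"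
    unfolding model_ivl_roots by (rule pl_interp_strict_mono_on[OF roots_strict_mono_on lower_times_strict_mono_on])
  moreover have "- x1 \<in> model_ivl (n+1)" "- x2 \<in> model_ivl (n+1)"
    using assms model_ivl_uminus by blast+
  ultimately show ?thesis unfolding down_time_def by (simp add: strict_mono_on_less_eq)
qed

lemma down_time_inj_on: "inj_on down_time (model_ivl (n+1))"
proof (rule inj_onI)
  fix x y assume "x \<in> model_ivl (n+1)" "y \<in> model_ivl (n+1)" "down_time x = down_time y"
  then show "x = y" using down_time_le_iff[of x y] down_time_le_iff[of y x] by simp
qed

lemma down_time_root:
  assumes "i \<le> n+1"
  shows "down_time (Pk_root (n+1) i) = \<tau> (2*n+2-i)"
proof -
  have "down_time (Pk_root (n+1) i) = pl_interp (Pk_root (n+1)) (\<lambda>j. \<tau> (n+1+j)) (n+1) (Pk_root (n+1) (n+1-i))"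
    using Pk_root_reflect[of "n+1" i] assms by (simp add: down_time_def)
  also have "\<dots> = \<tau> (n+1+(n+1-i))" using pl_interp_node[OF roots_strict_mono_on] by simp
  also have "n+1+(n+1-i) = 2*n+2-i" using assms by simp
  finally show ?thesis .
qed

lemma down_time_image: "down_time ` model_ivl (n+1) = {\<tau> (n+1)..\<tau> (2*n+2)}"
proof -
  let ?\<psi> = "pl_interp (Pk_root (n+1)) (\<lambda>j. \<tau> (n+1+j)) (n+1)"
  have "down_time ` model_ivl (n+1) = ?\<psi> ` (uminus ` model_ivl (n+1))"
    by (auto simp: down_time_def image_iff)
  also have "\<dots> = ?\<psi> ` {Pk_root (n+1) 0..Pk_root (n+1) (n+1)}"
    unfolding model_ivl_uminus by (simp only: model_ivl_roots)
  also have "\<dots> = {?\<psi> (Pk_root (n+1) 0)..?\<psi> (Pk_root (n+1) (n+1))}"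
    using strict_mono_on_leD[OF roots_strict_mono_on, of 0 "n+1"]
    by (intro continuous_strict_mono_on_image_Icc pl_interp_continuous_on roots_strict_mono_on
        pl_interp_strict_mono_on lower_times_strict_mono_on) auto
  also have "\<dots> = {\<tau> (n+1)..\<tau> (n+1+(n+1))}"
    using pl_interp_node[OF roots_strict_mono_on, of 0] pl_interp_node[OF roots_strict_mono_on, of "n+1"] by simp
  finally show ?thesis by (simp add: mult_2)
qed

lemma loop_map_upper: "x \<in> model_ivl (n+1) \<Longrightarrow> loop_map (x, Pk (n+1) x) = \<gamma> (up_time x)"
  using Pk_nonneg[of x "n+1"] by (simp add: loop_map_def)

lemma loop_map_lower:
  assumes "x \<in> model_ivl (n+1)"
  shows "loop_map (x, - Pk (n+1) x) = \<gamma> (down_time x)"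
proof (cases "Pk (n+1) x = 0")
  case True
  then obtain j where j: "j \<le> n+1" "x = Pk_root (n+1) j" using Pk_eq_0_iff[of "n+1" x] assms two_le_n by auto
  then have "loop_map (x, - Pk (n+1) x) = visit j" using True up_time_root by (simp add: loop_map_def)
  also have "\<dots> = \<gamma> (down_time x)" using visit_mirror[of j] down_time_root j by simp
  finally show ?thesis .
next
  case False
  then show ?thesis using Pk_nonneg[OF assms] by (simp add: loop_map_def)
qed

lemma loop_map_upper_branch: "loop_map ` upper_branch (n+1) = range \<gamma> \<inter> Splus f"
proof -
  have "loop_map ` upper_branch (n+1) = \<gamma> ` up_time ` model_ivl (n+1)"
    unfolding upper_branch_def image_image by (rule image_cong) (use loop_map_upper in auto)
  then show ?thesis using up_time_image range_Splus by simp
qed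

lemma loop_map_lower_branch: "loop_map ` lower_branch (n+1) = range \<gamma> \<inter> Sminus f"
proof -
  have "loop_map ` lower_branch (n+1) = \<gamma> ` down_time ` model_ivl (n+1)"
    unfolding lower_branch_def image_image by (rule image_cong) (use loop_map_lower in auto)
  then show ?thesis using down_time_image range_Sminus by simp
qed

lemma loop_map_image: "loop_map ` Lk (n+1) = range \<gamma>"
proof -
  have "Splus f \<union> Sminus f = UNIV" by (auto simp: Splus_def Sminus_def)
  then show ?thesis
    unfolding Lk_eq_branches image_Un loop_map_upper_branch loop_map_lower_branch by blast
qed

lemma loop_map_continuous_on: "continuous_on (Lk (n+1)) loop_map"
  unfolding Lk_eq_branches
proof (rule continuous_on_closed_Un)
  have "continuous_on (upper_branch (n+1)) (\<lambda>z. \<gamma> (up_time (fst z)))"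
    by (intro continuous_on_compose2[OF global_traj_continuous_on[OF traj]]
        continuous_on_compose2[OF up_time_continuous_on] continuous_intros) auto
  then show "continuous_on (upper_branch (n+1)) loop_map"
    by (rule continuous_on_eq) (use loop_map_upper in \<open>auto simp: upper_branch_def\<close>)
  have "continuous_on (lower_branch (n+1)) (\<lambda>z. \<gamma> (down_time (fst z)))"
    by (intro continuous_on_compose2[OF global_traj_continuous_on[OF traj]]
        continuous_on_compose2[OF down_time_continuous_on] continuous_intros) auto
  then show "continuous_on (lower_branch (n+1)) loop_map"
    by (rule continuous_on_eq) (use loop_map_lower in \<open>auto simp: lower_branch_def\<close>)
qed (use compact_upper_branch compact_lower_branch in \<open>auto intro: compact_imp_closed\<close>)

lemma loop_map_upper_eq_lower:
  assumes "x1 \<in> model_ivl (n+1)" "x2 \<in> model_ivl (n+1)" "\<gamma> (up_time x1) = \<gamma> (down_time x2)"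
  shows "x1 = x2" "Pk (n+1) x1 = 0"
proof -
  have t1: "up_time x1 \<in> {\<tau> 0..\<tau> (n+1)}" using up_time_image assms(1) by blast
  have t2: "down_time x2 \<in> {\<tau> (n+1)..\<tau> (2*n+2)}" using down_time_image assms(2) by blast
  have "\<gamma> (up_time x1) \<in> Splus f" "\<gamma> (down_time x2) \<in> Sminus f"
    using range_Splus range_Sminus t1 t2 by blast+
  then have Sig: "\<gamma> (up_time x1) \<in> Sig f" "\<gamma> (down_time x2) \<in> Sig f"
    using assms(3) by (auto simp: Splus_def Sminus_def Sig_def)
  have halves: "{\<tau> 0..\<tau> (n+1)} \<subseteq> {\<tau> 0..\<tau> (2*n+2)}" "{\<tau> (n+1)..\<tau> (2*n+2)} \<subseteq> {\<tau> 0..\<tau> (2*n+2)}"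
    using \<tau>_le_iff[of 0 "n+1"] \<tau>_le_iff[of "n+1" "2*n+2"] by auto
  obtain j where j: "j \<le> 2*n+2" "up_time x1 = \<tau> j"
    by (rule Sig_time[of "up_time x1"]) (use t1 halves Sig in auto)
  obtain i where i: "i \<le> 2*n+2" "down_time x2 = \<tau> i"
    by (rule Sig_time[of "down_time x2"]) (use t2 halves Sig in auto)
  have "j \<le> n+1" using j t1 \<tau>_le_iff[of j "n+1"] by auto
  have "n+1 \<le> i" using i t2 \<tau>_le_iff[of "n+1" i] by auto
  have roots: "Pk_root (n+1) j \<in> model_ivl (n+1)" "Pk_root (n+1) (2*n+2-i) \<in> model_ivl (n+1)"
    using Pk_root_in_model_ivl[of "n+1"] two_le_n \<open>j \<le> n+1\<close> \<open>n+1 \<le> i\<close> by auto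
  have x1: "x1 = Pk_root (n+1) j"
    using strict_mono_on_eqD[OF up_time_strict_mono_on _ roots(1) assms(1)] up_time_root[OF \<open>j \<le> n+1\<close>] j(2)
    by simp
  have "down_time (Pk_root (n+1) (2*n+2-i)) = \<tau> i"
    using down_time_root[of "2*n+2-i"] \<open>n+1 \<le> i\<close> i(1) by simp
  then have x2: "x2 = Pk_root (n+1) (2*n+2-i)"
    using inj_onD[OF down_time_inj_on _ assms(2) roots(2)] i(2) by simp
  have "visit j = visit (2*n+2-i)"
    using assms(3) j(2) i visit_mirror[of "2*n+2-i"] \<open>n+1 \<le> i\<close> by simp
  then have "j = 2*n+2-i" by (rule visit_inj[rotated 2]) (use \<open>j \<le> n+1\<close> \<open>n+1 \<le> i\<close> in auto)
  then show "x1 = x2" using x1 x2 by simp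
  show "Pk (n+1) x1 = 0" using Pk_eq_0_iff[of "n+1" x1] assms(1) x1 \<open>j \<le> n+1\<close> two_le_n by auto
qed

lemma loop_map_inj_on: "inj_on loop_map (Lk (n+1))"
proof (rule inj_onI)
  fix z1 z2 assume z: "z1 \<in> Lk (n+1)" "z2 \<in> Lk (n+1)" "loop_map z1 = loop_map z2"
  have inj_up: "inj_on (\<gamma> \<circ> up_time) (model_ivl (n+1))"
    by (rule comp_inj_on) (use strict_mono_on_imp_inj_on[OF up_time_strict_mono_on] upper_half_inj up_time_image in auto)
  have inj_down: "inj_on (\<gamma> \<circ> down_time) (model_ivl (n+1))"
    by (rule comp_inj_on) (use down_time_inj_on lower_half_inj down_time_image in auto)
  obtain x1 where x1: "x1 \<in> model_ivl (n+1)" "z1 = (x1, Pk (n+1) x1) \<or> z1 = (x1, - Pk (n+1) x1)"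
    using z(1) unfolding Lk_eq_branches upper_branch_def lower_branch_def by auto
  obtain x2 where x2: "x2 \<in> model_ivl (n+1)" "z2 = (x2, Pk (n+1) x2) \<or> z2 = (x2, - Pk (n+1) x2)"
    using z(2) unfolding Lk_eq_branches upper_branch_def lower_branch_def by auto
  from x1(2) x2(2) show "z1 = z2"
  proof (elim disjE)
    assume "z1 = (x1, Pk (n+1) x1)" "z2 = (x2, Pk (n+1) x2)"
    then show ?thesis using inj_onD[OF inj_up _ x1(1) x2(1)] z(3) loop_map_upper x1(1) x2(1) by simp
  next
    assume "z1 = (x1, - Pk (n+1) x1)" "z2 = (x2, - Pk (n+1) x2)"
    then show ?thesis using inj_onD[OF inj_down _ x1(1) x2(1)] z(3) loop_map_lower x1(1) x2(1) by simp
  next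
    assume "z1 = (x1, Pk (n+1) x1)" "z2 = (x2, - Pk (n+1) x2)"
    then show ?thesis using loop_map_upper_eq_lower[OF x1(1) x2(1)] z(3) loop_map_upper loop_map_lower x1(1) x2(1)
      by simp
  next
    assume "z1 = (x1, - Pk (n+1) x1)" "z2 = (x2, Pk (n+1) x2)"
    then show ?thesis using loop_map_upper_eq_lower[OF x2(1) x1(1)] z(3) loop_map_upper loop_map_lower x1(1) x2(1)
      by simp
  qed
qed

lemma loop_map_Sig: "loop_map ` (Lk (n+1) \<inter> Sig snd) = range \<gamma> \<inter> Sig f"
proof -
  have "loop_map (Pk_root (n+1) j, 0) = visit j" if "j \<le> n+1" for j
  proof -
    have root: "Pk_root (n+1) j \<in> model_ivl (n+1)" using Pk_root_in_model_ivl that two_le_n by simp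
    then have "Pk (n+1) (Pk_root (n+1) j) = 0" using Pk_eq_0_iff[of "n+1"] two_le_n that by auto
    then show ?thesis using loop_map_upper[OF root] up_time_root[OF that] by simp
  qed
  then have "loop_map ` (\<lambda>j. (Pk_root (n+1) j, 0)) ` {..n+1} = visit ` {..n+1}"
    unfolding image_image by (intro image_cong) auto
  then show ?thesis using Lk_Sig[of "n+1"] range_Sig two_le_n by simp
qed

lemma loop_map_reach_upper:
  assumes "z1 \<in> upper_branch (n+1)" "z2 \<in> upper_branch (n+1)"
  shows "reach (Xk (n+1)) (upper_branch (n+1)) z1 z2 \<longleftrightarrow> reach X (range \<gamma> \<inter> Splus f) (loop_map z1) (loop_map z2)"
proof -
  obtain x1 x2 where x: "x1 \<in> model_ivl (n+1)" "z1 = (x1, Pk (n+1) x1)" "x2 \<in> model_ivl (n+1)" "z2 = (x2, Pk (n+1) x2)"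
    using assms unfolding upper_branch_def by auto
  have "reach (Xk (n+1)) (upper_branch (n+1)) z1 z2 \<longleftrightarrow> x1 \<le> x2" using reach_upper_branch x by simp
  also have "\<dots> \<longleftrightarrow> up_time x1 \<le> up_time x2" using strict_mono_on_less_eq[OF up_time_strict_mono_on] x by simp
  also have "\<dots> \<longleftrightarrow> reach X (range \<gamma> \<inter> Splus f) (\<gamma> (up_time x1)) (\<gamma> (up_time x2))"
    using reach_upper_half up_time_image x by blast
  finally show ?thesis using loop_map_upper x by simp
qed

lemma loop_map_reach_lower:
  assumes "z1 \<in> lower_branch (n+1)" "z2 \<in> lower_branch (n+1)"
  shows "reach (Yk (n+1)) (lower_branch (n+1)) z1 z2 \<longleftrightarrow> reach Y (range \<gamma> \<inter> Sminus f) (loop_map z1) (loop_map z2)"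
proof -
  obtain x1 x2 where x: "x1 \<in> model_ivl (n+1)" "z1 = (x1, - Pk (n+1) x1)" "x2 \<in> model_ivl (n+1)" "z2 = (x2, - Pk (n+1) x2)"
    using assms unfolding lower_branch_def by auto
  have "reach (Yk (n+1)) (lower_branch (n+1)) z1 z2 \<longleftrightarrow> x2 \<le> x1" using reach_lower_branch x by simp
  also have "\<dots> \<longleftrightarrow> down_time x1 \<le> down_time x2" using down_time_le_iff x by simp
  also have "\<dots> \<longleftrightarrow> reach Y (range \<gamma> \<inter> Sminus f) (\<gamma> (down_time x1)) (\<gamma> (down_time x2))"
    using reach_lower_half down_time_image x by blast
  finally show ?thesis using loop_map_lower x by simp
qed

theorem sigma_equiv_model: "sigma_equiv (Xk (n+1)) (Yk (n+1)) snd (Lk (n+1)) X Y f (range \<gamma>)"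
proof -
  obtain g where "homeomorphism (Lk (n+1)) (range \<gamma>) loop_map g"
    using homeomorphism_compact[OF _ loop_map_continuous_on loop_map_image loop_map_inj_on]
      compact_Un[OF compact_upper_branch compact_lower_branch] by (auto simp: Lk_eq_branches)
  then show ?thesis
    unfolding sigma_equiv_def Lk_Splus Lk_Sminus model_slide_esc_empty range_slide_esc
    using loop_map_Sig loop_map_upper_branch loop_map_lower_branch loop_map_reach_upper loop_map_reach_lower
    by (intro exI[of _ loop_map] exI[of _ g]) auto
qed

end

lemma homoclinic_loop_times_of_homoclinic_loop:
  assumes "PSVF X Y f" "homoclinic_loop X Y f n \<gamma> p" "2 \<le> n"
  obtains T \<tau> where "homoclinic_loop_times X Y f \<gamma> T \<tau> n p"
proof -
  obtain T \<tau> where T: "T > 0" "\<forall>t. \<gamma> (t + T) = \<gamma> t"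
    and \<tau>: "\<forall>j\<le>2*n+1. \<tau> j < \<tau> (Suc j)" "\<tau> (2*n+2) = \<tau> 0 + T" "\<forall>j\<le>2*n+1. \<gamma> (\<tau> j) \<in> Sig f"
      "\<forall>j\<le>2*n+1. \<forall>s. \<tau> j < s \<and> s < \<tau> (Suc j) \<longrightarrow> \<gamma> s \<notin> Sig f"
      "crossing X Y f (\<gamma> (\<tau> 0))" "crossing X Y f (\<gamma> (\<tau> (n+1)))"
      "\<forall>i\<in>{1..n}. \<gamma> (\<tau> i) = p i \<and> \<gamma> (\<tau> (n+1+i)) = p (n+1-i)"
    using assms(2) unfolding homoclinic_loop_def by blast
  have "homoclinic_loop_times X Y f \<gamma> T \<tau> n p"
    using assms T \<tau> unfolding PSVF_def homoclinic_loop_def by unfold_locales auto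
  then show ?thesis by (rule that)
qed

theorem theoremB:
  fixes k :: nat
    and X' Y' :: "real \<times> real \<Rightarrow> real \<times> real"
    and f' :: "real \<times> real \<Rightarrow> real"
    and \<gamma> :: "real \<Rightarrow> real \<times> real"
    and p :: "nat \<Rightarrow> real \<times> real"
  assumes "k \<ge> 3"
    and "PSVF X' Y' f'"
    and "homoclinic_loop X' Y' f' (k - 1) \<gamma> p"
  shows "sigma_equiv (Xk k) (Yk k) snd (Lk k) X' Y' f' (range \<gamma>)"
proof -
  obtain T \<tau> where "homoclinic_loop_times X' Y' f' \<gamma> T \<tau> (k - 1) p"
    using homoclinic_loop_times_of_homoclinic_loop[OF assms(2,3)] assms(1) by fastforce
  then obtain \<tau>' p' where "upper_first_loop X' Y' f' \<gamma> T \<tau>' (k - 1) p'"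
    by (rule homoclinic_loop_times.obtain_upper_first_loop)
  then have "sigma_equiv (Xk (k - 1 + 1)) (Yk (k - 1 + 1)) snd (Lk (k - 1 + 1)) X' Y' f' (range \<gamma>)"
    by (rule upper_first_loop.sigma_equiv_model)
  then show ?thesis using assms(1) by simp
qed

end
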